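(* There is an absolute constant $c>0$ such that the following holds. Let $\epsilon>0$, $\delta\in(0,1)$, assume $C_2<\infty$, $\epsilon_{\mathcal G,\mathcal V,\mathcal P}=\epsilon_{\mathcal V,\mathcal P}=0$, and $0<\lambda\le\frac{(1-\gamma)\epsilon}{2\ln|\mathcal A|}$. If $$n\ge c\,\frac{C_2\,V_{\lambda,\max}^2\ln\frac{|\mathcal V||\mathcal P||\mathcal G|}{\delta}}{\epsilon^2(1-\gamma)^2},$$ then with probability at least $1-\delta$ over the draw of $\mathcal D$, any SBEED output $(\hat V,\hat\pi)$ satisfies $J(\pi^\star)-J(\hat\pi)\le\epsilon$.
   Context: A finite MDP $(\mathcal S,\mathcal A,\gamma,P,R,d_0)$ with $\gamma\in[0,1)$, $P(\cdot\mid s,a)\in\Delta(\mathcal S)$, $R:\mathcal S\times\mathcal A\to[0,R_{\max}]$, $d_0\in\Delta(\mathcal S)$. For a policy $\pi$ and $\lambda\ge0$, $J_\lambda(\pi)=\mathbb E\big[\sum_{t\ge0}\gamma^t(R(s_t,a_t)-\lambda\ln\pi(a_t\mid s_t))\big]$ with $s_0\sim d_0$, $a_t\sim\pi(\cdot\mid s_t)$, $s_{t+1}\sim P(\cdot\mid s_t,a_t)$; $J=J_0$. $\pi^\star$ is a deterministic maximizer of $J$, $\pi^\star_\lambda$ the maximizer of $J_\lambda$. Occupancy $d^\pi(s)=(1-\gamma)\sum_t\gamma^t\Pr(s_t=s)$, $d^\pi(s,a)=d^\pi(s)\pi(a\mid s)$. $(\mathbb PV)(s,a)=\sum_{s'}P(s'\mid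 s,a)V(s')$; consistency operator $(\mathcal C^\pi_\lambda V)(s,a)=R(s,a)+\gamma(\mathbb PV)(s,a)-\lambda\ln\pi(a\mid s)$. Data distribution $\mu\in\Delta(\mathcal S\times\mathcal A)$, $\|f\|^2_{2,\mu}=\mathbb E_{\mu}[f(s,a)^2]$ (for $V$ depending only on $s$, $V-\mathcal C^\pi_\lambda V$ is the function $(s,a)\mapsto V(s)-(\mathcal C^\pi_\lambda V)(s,a)$). $V_{\lambda,\max}=(R_{\max}+\lambda\ln|\mathcal A|)/(1-\gamma)$. Finite function classes: $\mathcal V\subset[0,V_{\lambda,\max}]^{\mathcal S}$, $\mathcal P\subset\{\pi:\|\ln\pi\|_\infty\le V_{\lambda,\max}/\lambda\}$, $\mathcal G\subset[0,2V_{\lambda,\max}]^{\mathcal S\times\mathcal A}$. Dataset $\mathcal D=\{(s_i,a_i,r_i,s_i')\}_{i=1}^n$ with $(s_i,a_i)$ i.i.d. from $\mu$, $r_i=R(s_i,a_i)$, $s_i'\sim P(\cdot\mid s_i,a_i)$ independently. Empirical losses: $\mathscr L_{\mathcal D}(V;V,\pi)=\frac1n\sum_i\big(V(s_i)-r_i-\gamma V(s_i')+\lambda\ln\pi(a_i\mid s_i)\big)^2$ and $\mathscr R_{\mathcal D}(g;V,\pi)=\frac1n\sum_i\big(g(s_i,a_i)-r_i-\gamma V(s_i')+\lambda\ln\pi(a_i\mid s_i)\big)^2$. The SBEED output is $(\hat V,\hat\pi)\in\arg\min_{V\in\mathcal V,\pi\in\mathcal P}\max_{g\in\mathcal G}\big[\mathscr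 L_{\mathcal D}(V;V,\pi)-\mathscr R_{\mathcal D}(g;V,\pi)\big]$. Concentrability: $C_2=\max_{\pi\in\mathcal P\cup\{\pi^\star_\lambda\}}\|d^\pi/\mu\|^2_{2,\mu}$. Approximation errors: $\epsilon_{\mathcal V,\mathcal P}=\min_{V\in\mathcal V,\pi\in\mathcal P}\|V-\mathcal C^\pi_\lambda V\|^2_{2,\mu}$ and $\epsilon_{\mathcal G,\mathcal V,\mathcal P}=\max_{V\in\mathcal V,\pi\in\mathcal P}\min_{g\in\mathcal G}\|g-\mathcal C^\pi_\lambda V\|^2_{2,\mu}$. *)

theory Defs
  imports "HOL-Probability.Probability"
begin

text \<open>Finite MDP carried on natural numbers: the state space is a finite set S of nats,
the action space a finite set A of nats (so that the absolute constant in the theorem does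
not depend on |S| or |A|). Transition kernel P s a :: nat pmf, initial distribution d0,
policies are maps nat => nat pmf (\<pi>(a|s) = pmf (\<pi> s) a).\<close>

definition policy :: "nat set \<Rightarrow> nat set \<Rightarrow> (nat \<Rightarrow> nat pmf) \<Rightarrow> bool" where
  "policy S A \<pi> \<longleftrightarrow> (\<forall>s\<in>S. set_pmf (\<pi> s) \<subseteq> A) \<and> (\<forall>s. s \<notin> S \<longrightarrow> \<pi> s = undefined)"

definition deterministic_policy :: "nat set \<Rightarrow> nat set \<Rightarrow> (nat \<Rightarrow> nat pmf) \<Rightarrow> bool" where
  "deterministic_policy S A \<pi> \<longleftrightarrow> policy S A \<pi> \<and> (\<forall>s\<in>S. \<exists>a. \<pi> s = return_pmf a)"

primrec state_pmf :: "(nat \<Rightarrow> nat \<Rightarrow> nat pmf) \<Rightarrow> nat pmf \<Rightarrow> (nat \<Rightarrow> nat pmf) \<Rightarrow> nat \<Rightarrow> nat pmf" where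
  "state_pmf P d0 \<pi> 0 = d0"
| "state_pmf P d0 \<pi> (Suc t) =
     bind_pmf (state_pmf P d0 \<pi> t) (\<lambda>s. bind_pmf (\<pi> s) (\<lambda>a. P s a))"

definition J_reg :: "real \<Rightarrow> (nat \<Rightarrow> nat \<Rightarrow> nat pmf) \<Rightarrow> (nat \<Rightarrow> nat \<Rightarrow> real) \<Rightarrow> nat pmf
      \<Rightarrow> real \<Rightarrow> (nat \<Rightarrow> nat pmf) \<Rightarrow> real" where
  "J_reg \<gamma> P R d0 lam \<pi> =
     (\<Sum>t. \<gamma> ^ t * measure_pmf.expectation (state_pmf P d0 \<pi> t)
        (\<lambda>s. measure_pmf.expectation (\<pi> s) (\<lambda>a. R s a - lam * ln (pmf (\<pi> s) a))))"

definition J_ret :: "real \<Rightarrow> (nat \<Rightarrow> nat \<Rightarrow> nat pmf) \<Rightarrow> (nat \<Rightarrow> nat \<Rightarrow> real) \<Rightarrow> nat pmf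
      \<Rightarrow> (nat \<Rightarrow> nat pmf) \<Rightarrow> real" where
  "J_ret \<gamma> P R d0 \<pi> = J_reg \<gamma> P R d0 0 \<pi>"

definition occupancy :: "real \<Rightarrow> (nat \<Rightarrow> nat \<Rightarrow> nat pmf) \<Rightarrow> nat pmf \<Rightarrow> (nat \<Rightarrow> nat pmf)
      \<Rightarrow> nat \<times> nat \<Rightarrow> real" where
  "occupancy \<gamma> P d0 \<pi> = (\<lambda>(s,a). (1 - \<gamma>) * (\<Sum>t. \<gamma> ^ t * pmf (state_pmf P d0 \<pi> t) s) * pmf (\<pi> s) a)"

definition norm2_mu :: "(nat \<times> nat) pmf \<Rightarrow> (nat \<times> nat \<Rightarrow> real) \<Rightarrow> real" where
  "norm2_mu \<mu> f = measure_pmf.expectation \<mu> (\<lambda>x. (f x)\<^sup>2)"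

definition consist :: "real \<Rightarrow> (nat \<Rightarrow> nat \<Rightarrow> nat pmf) \<Rightarrow> (nat \<Rightarrow> nat \<Rightarrow> real) \<Rightarrow> real
      \<Rightarrow> (nat \<Rightarrow> nat pmf) \<Rightarrow> (nat \<Rightarrow> real) \<Rightarrow> nat \<times> nat \<Rightarrow> real" where
  "consist \<gamma> P R lam \<pi> V = (\<lambda>(s,a). R s a + \<gamma> * measure_pmf.expectation (P s a) V - lam * ln (pmf (\<pi> s) a))"

definition Vmax :: "nat set \<Rightarrow> real \<Rightarrow> real \<Rightarrow> real \<Rightarrow> real" where
  "Vmax A \<gamma> Rmax lam = (Rmax + lam * ln (real (card A))) / (1 - \<gamma>)"

definition conc_C2 :: "real \<Rightarrow> (nat \<Rightarrow> nat \<Rightarrow> nat pmf) \<Rightarrow> nat pmf \<Rightarrow> (nat \<times> nat) pmf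
      \<Rightarrow> (nat \<Rightarrow> nat pmf) set \<Rightarrow> real" where
  "conc_C2 \<gamma> P d0 \<mu> Pis =
     Max ((\<lambda>\<pi>. norm2_mu \<mu> (\<lambda>x. occupancy \<gamma> P d0 \<pi> x / pmf \<mu> x)) ` Pis)"

text \<open>C_2 < infinity: every occupancy in the family is absolutely continuous w.r.t. mu.\<close>
definition C2_finite :: "nat set \<Rightarrow> nat set \<Rightarrow> real \<Rightarrow> (nat \<Rightarrow> nat \<Rightarrow> nat pmf) \<Rightarrow> nat pmf
      \<Rightarrow> (nat \<times> nat) pmf \<Rightarrow> (nat \<Rightarrow> nat pmf) set \<Rightarrow> bool" where
  "C2_finite S A \<gamma> P d0 \<mu> Pis \<longleftrightarrow>
     (\<forall>\<pi>\<in>Pis. \<forall>x\<in>S \<times> A. pmf \<mu> x = 0 \<longrightarrow> occupancy \<gamma> P d0 \<pi> x = 0)"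

definition eps_VP :: "real \<Rightarrow> (nat \<Rightarrow> nat \<Rightarrow> nat pmf) \<Rightarrow> (nat \<Rightarrow> nat \<Rightarrow> real) \<Rightarrow> real
      \<Rightarrow> (nat \<times> nat) pmf \<Rightarrow> (nat \<Rightarrow> real) set \<Rightarrow> (nat \<Rightarrow> nat pmf) set \<Rightarrow> real" where
  "eps_VP \<gamma> P R lam \<mu> Vc Pc =
     Min ((\<lambda>(V, \<pi>). norm2_mu \<mu> (\<lambda>(s,a). V s - consist \<gamma> P R lam \<pi> V (s,a))) ` (Vc \<times> Pc))"

definition eps_GVP :: "real \<Rightarrow> (nat \<Rightarrow> nat \<Rightarrow> nat pmf) \<Rightarrow> (nat \<Rightarrow> nat \<Rightarrow> real) \<Rightarrow> real
      \<Rightarrow> (nat \<times> nat) pmf \<Rightarrow> (nat \<times> nat \<Rightarrow> real) set \<Rightarrow> (nat \<Rightarrow> real) set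
      \<Rightarrow> (nat \<Rightarrow> nat pmf) set \<Rightarrow> real" where
  "eps_GVP \<gamma> P R lam \<mu> Gc Vc Pc =
     Max ((\<lambda>(V, \<pi>). Min ((\<lambda>g. norm2_mu \<mu> (\<lambda>x. g x - consist \<gamma> P R lam \<pi> V x)) ` Gc)) ` (Vc \<times> Pc))"

text \<open>One sample (s,a,s'): (s,a) ~ mu, s' ~ P(.|s,a); the reward r = R(s,a) is computed from (s,a).
 A dataset of size n is n independent samples.\<close>
definition sample_pmf :: "(nat \<times> nat) pmf \<Rightarrow> (nat \<Rightarrow> nat \<Rightarrow> nat pmf) \<Rightarrow> (nat \<times> nat \<times> nat) pmf" where
  "sample_pmf \<mu> P = bind_pmf \<mu> (\<lambda>(s,a). map_pmf (\<lambda>s'. (s, a, s')) (P s a))"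

primrec dataset_pmf :: "(nat \<times> nat) pmf \<Rightarrow> (nat \<Rightarrow> nat \<Rightarrow> nat pmf) \<Rightarrow> nat \<Rightarrow> (nat \<times> nat \<times> nat) list pmf" where
  "dataset_pmf \<mu> P 0 = return_pmf []"
| "dataset_pmf \<mu> P (Suc n) =
     bind_pmf (sample_pmf \<mu> P) (\<lambda>x. map_pmf (\<lambda>xs. x # xs) (dataset_pmf \<mu> P n))"

definition loss_L :: "real \<Rightarrow> (nat \<Rightarrow> nat \<Rightarrow> real) \<Rightarrow> real \<Rightarrow> (nat \<times> nat \<times> nat) list
      \<Rightarrow> (nat \<Rightarrow> real) \<Rightarrow> (nat \<Rightarrow> nat pmf) \<Rightarrow> real" where
  "loss_L \<gamma> R lam D V \<pi> =
     (\<Sum>(s, a, s')\<leftarrow>D. (V s - R s a - \<gamma> * V s' + lam * ln (pmf (\<pi> s) a))\<^sup>2) / real (length D)"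

definition loss_R :: "real \<Rightarrow> (nat \<Rightarrow> nat \<Rightarrow> real) \<Rightarrow> real \<Rightarrow> (nat \<times> nat \<times> nat) list
      \<Rightarrow> (nat \<times> nat \<Rightarrow> real) \<Rightarrow> (nat \<Rightarrow> real) \<Rightarrow> (nat \<Rightarrow> nat pmf) \<Rightarrow> real" where
  "loss_R \<gamma> R lam D g V \<pi> =
     (\<Sum>(s, a, s')\<leftarrow>D. (g (s, a) - R s a - \<gamma> * V s' + lam * ln (pmf (\<pi> s) a))\<^sup>2) / real (length D)"

definition sbeed_obj :: "real \<Rightarrow> (nat \<Rightarrow> nat \<Rightarrow> real) \<Rightarrow> real \<Rightarrow> (nat \<times> nat \<Rightarrow> real) set
      \<Rightarrow> (nat \<times> nat \<times> nat) list \<Rightarrow> (nat \<Rightarrow> real) \<Rightarrow> (nat \<Rightarrow> nat pmf) \<Rightarrow> real" where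
  "sbeed_obj \<gamma> R lam Gc D V \<pi> =
     Max ((\<lambda>g. loss_L \<gamma> R lam D V \<pi> - loss_R \<gamma> R lam D g V \<pi>) ` Gc)"

definition sbeed_output :: "real \<Rightarrow> (nat \<Rightarrow> nat \<Rightarrow> real) \<Rightarrow> real \<Rightarrow> (nat \<Rightarrow> real) set
      \<Rightarrow> (nat \<Rightarrow> nat pmf) set \<Rightarrow> (nat \<times> nat \<Rightarrow> real) set
      \<Rightarrow> (nat \<times> nat \<times> nat) list \<Rightarrow> (nat \<Rightarrow> real) \<Rightarrow> (nat \<Rightarrow> nat pmf) \<Rightarrow> bool" where
  "sbeed_output \<gamma> R lam Vc Pc Gc D V \<pi> \<longleftrightarrow>
     V \<in> Vc \<and> \<pi> \<in> Pc \<and>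
     (\<forall>V'\<in>Vc. \<forall>\<pi>'\<in>Pc. sbeed_obj \<gamma> R lam Gc D V \<pi> \<le> sbeed_obj \<gamma> R lam Gc D V' \<pi>')"

definition finite_mdp :: "nat set \<Rightarrow> nat set \<Rightarrow> real \<Rightarrow> (nat \<Rightarrow> nat \<Rightarrow> nat pmf)
      \<Rightarrow> (nat \<Rightarrow> nat \<Rightarrow> real) \<Rightarrow> real \<Rightarrow> nat pmf \<Rightarrow> bool" where
  "finite_mdp S A \<gamma> P R Rmax d0 \<longleftrightarrow>
     finite S \<and> S \<noteq> {} \<and> finite A \<and> A \<noteq> {} \<and> 0 \<le> \<gamma> \<and> \<gamma> < 1 \<and>
     (\<forall>s\<in>S. \<forall>a\<in>A. set_pmf (P s a) \<subseteq> S \<and> 0 \<le> R s a \<and> R s a \<le> Rmax) \<and>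
     set_pmf d0 \<subseteq> S"

definition function_classes :: "nat set \<Rightarrow> nat set \<Rightarrow> real \<Rightarrow> real
      \<Rightarrow> (nat \<Rightarrow> real) set \<Rightarrow> (nat \<Rightarrow> nat pmf) set \<Rightarrow> (nat \<times> nat \<Rightarrow> real) set \<Rightarrow> bool" where
  "function_classes S A vmax lam Vc Pc Gc \<longleftrightarrow>
     finite Vc \<and> Vc \<noteq> {} \<and> finite Pc \<and> Pc \<noteq> {} \<and> finite Gc \<and> Gc \<noteq> {} \<and>
     (\<forall>V\<in>Vc. (\<forall>s\<in>S. 0 \<le> V s \<and> V s \<le> vmax) \<and> (\<forall>s. s \<notin> S \<longrightarrow> V s = 0)) \<and>
     (\<forall>\<pi>\<in>Pc. policy S A \<pi> \<and>
        (\<forall>s\<in>S. \<forall>a\<in>A. \<bar>ln (pmf (\<pi> s) a)\<bar> \<le> vmax / lam \<and> 0 < pmf (\<pi> s) a)) \<and>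
     (\<forall>g\<in>Gc. (\<forall>x\<in>S \<times> A. 0 \<le> g x \<and> g x \<le> 2 * vmax) \<and> (\<forall>x. x \<notin> S \<times> A \<longrightarrow> g x = 0))"

end

theory Submission
  imports Defs
begin

text \<open>
  For a value function V and a policy pi, telescoping along the Bellman flow of the discounted
  occupancy d^pi gives J_lam(pi) = E_d0 V - E_{d^pi}[V - C^pi V] / (1 - gamma). Apply this to the
  SBEED output (V, pi) and to pi*_lam: replacing the residual of pi*_lam by that of pi under d^{pi*_lam}
  only costs a KL term of the right sign, and J and J_lam differ by at most lam ln|A| / (1 - gamma).
  Transferring the residuals from d^pi to mu by Cauchy--Schwarz, the suboptimality of pi is at most
  2 sqrt (C_2 ||V - C^pi V||^2_mu) / (1 - gamma) + eps / 2.

  It remains to show that the output has a small residual. Fix a pair (V0, pi0) with zero residual,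
  and give each candidate (V, pi) its exact critic C^pi V. For every candidate and every critic g' of
  (V0, pi0), the per-sample difference of the two SBEED loss gaps has mean ||V - C^pi V||^2_mu +
  ||V0 - g'||^2_mu and second moment at most 72 V_max^2 times its mean, so a Bernstein-type Chernoff
  bound makes a nonpositive empirical mean exponentially unlikely when the residual is large. But
  minimality of the SBEED objective at the output produces such a nonpositive mean, and a union bound
  over all candidates and critics concludes.
\<close>

section \<open>Finite expectations and elementary inequalities\<close>

lemma integral_pmf_eq_finite_sum:
  assumes "finite X" "set_pmf p \<subseteq> X"
  shows "measure_pmf.expectation p f = (\<Sum>x\<in>X. pmf p x * f x)"
  by (subst integral_measure_pmf_real[of X]) (use assms in \<open>auto simp: mult.commute\<close>)

lemma abs_pmf_weighted_sum_le:
  assumes "finite X"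
  shows "\<bar>\<Sum>x\<in>X. pmf p x * f x\<bar> \<le> (\<Sum>x\<in>X. \<bar>f x\<bar>)"
proof -
  have "\<bar>\<Sum>x\<in>X. pmf p x * f x\<bar> \<le> (\<Sum>x\<in>X. \<bar>pmf p x * f x\<bar>)"
    by (rule sum_abs)
  also have "\<dots> \<le> (\<Sum>x\<in>X. \<bar>f x\<bar>)"
    by (intro sum_mono) (simp add: abs_mult mult_left_le_one_le[OF abs_ge_zero pmf_nonneg pmf_le_1])
  finally show ?thesis .
qed

lemma gibbs_inequality:
  fixes p q :: "'a \<Rightarrow> real"
  assumes "finite X" "\<And>x. x \<in> X \<Longrightarrow> 0 \<le> p x" "sum p X = 1"
    and "\<And>x. x \<in> X \<Longrightarrow> 0 < q x" "sum q X \<le> 1"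
  shows "0 \<le> (\<Sum>x\<in>X. p x * (ln (p x) - ln (q x)))"
proof -
  have "p x - q x \<le> p x * (ln (p x) - ln (q x))" if x: "x \<in> X" for x
  proof (cases "p x = 0")
    case False
    then have p: "0 < p x" and q: "0 < q x" using assms(2,4)[OF x] by auto
    have "p x * (ln (q x) - ln (p x)) \<le> p x * (q x / p x - 1)"
      using ln_le_minus_one[of "q x / p x"] p q by (simp add: mult_left_mono ln_div)
    also have "\<dots> = q x - p x" using p by (simp add: field_simps)
    finally show ?thesis by (simp add: algebra_simps)
  qed (use assms(4)[OF x] in simp)
  then have "(\<Sum>x\<in>X. p x - q x) \<le> (\<Sum>x\<in>X. p x * (ln (p x) - ln (q x)))"
    by (rule sum_mono)
  moreover have "0 \<le> (\<Sum>x\<in>X. p x - q x)"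
    using assms(3,5) by (simp add: sum_subtractf)
  ultimately show ?thesis by linarith
qed

lemma entropy_le_ln_card:
  fixes p :: "'a \<Rightarrow> real"
  assumes "finite X" "\<And>x. x \<in> X \<Longrightarrow> 0 \<le> p x" "sum p X = 1"
  shows "- (\<Sum>x\<in>X. p x * ln (p x)) \<le> ln (real (card X))"
proof -
  have card: "0 < card X" using assms(1,3) by (auto simp: card_gt_0_iff)
  have "0 \<le> (\<Sum>x\<in>X. p x * (ln (p x) - ln (1 / real (card X))))"
    by (rule gibbs_inequality) (use assms card in auto)
  also have "\<dots> = (\<Sum>x\<in>X. p x * ln (p x)) + ln (real (card X)) * sum p X"
    using card by (simp add: ln_div algebra_simps sum.distrib sum_distrib_left sum_distrib_right)
  finally show ?thesis using assms(3) by simp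
qed

lemma norm2_mu_nonneg: "0 \<le> norm2_mu \<mu> f"
  unfolding norm2_mu_def by simp

lemma norm2_mu_finite_sum:
  assumes "finite X" "set_pmf \<mu> \<subseteq> X"
  shows "norm2_mu \<mu> f = (\<Sum>x\<in>X. pmf \<mu> x * (f x)\<^sup>2)"
  unfolding norm2_mu_def by (rule integral_pmf_eq_finite_sum[OF assms])

lemma norm2_mu_eq_0_imp_zero_on_support:
  assumes "norm2_mu \<mu> f = 0" "finite X" "set_pmf \<mu> \<subseteq> X" "x \<in> set_pmf \<mu>"
  shows "f x = 0"
proof -
  have "(\<Sum>y\<in>X. pmf \<mu> y * (f y)\<^sup>2) = 0"
    using assms(1) norm2_mu_finite_sum[OF assms(2,3)] by simp
  then have "\<forall>y\<in>X. pmf \<mu> y * (f y)\<^sup>2 = 0"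
    using assms(2) by (subst (asm) sum_nonneg_eq_0_iff) auto
  moreover have "x \<in> X" "pmf \<mu> x \<noteq> 0" using assms(3,4) by (auto simp: set_pmf_iff)
  ultimately show ?thesis by auto
qed

lemma norm2_mu_le_square:
  assumes "finite X" "set_pmf \<mu> \<subseteq> X" "\<And>x. x \<in> set_pmf \<mu> \<Longrightarrow> \<bar>f x\<bar> \<le> B"
  shows "norm2_mu \<mu> f \<le> B\<^sup>2"
proof -
  have "pmf \<mu> y * (f y)\<^sup>2 \<le> pmf \<mu> y * B\<^sup>2" for y
  proof (cases "y \<in> set_pmf \<mu>")
    case True
    then have "(f y)\<^sup>2 \<le> B\<^sup>2" using assms(3) abs_le_square_iff by fastforce
    then show ?thesis by (rule mult_left_mono) simp
  qed (simp add: set_pmf_iff)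
  then have "norm2_mu \<mu> f \<le> (\<Sum>y\<in>X. pmf \<mu> y * B\<^sup>2)"
    unfolding norm2_mu_finite_sum[OF assms(1,2)] by (rule sum_mono)
  also have "\<dots> = B\<^sup>2"
    using sum_pmf_eq_1[OF assms(1,2)] by (simp add: sum_distrib_right[symmetric])
  finally show ?thesis .
qed

lemma exp_neg_le_quadratic:
  fixes x :: real
  assumes "\<bar>x\<bar> \<le> 1"
  shows "exp (- x) \<le> 1 - x + x\<^sup>2"
proof (cases "x \<le> 0")
  case True
  then show ?thesis
    using exp_bound[of "- x"] assms by simp
next
  case False
  have "exp (- x) * (1 + x) \<le> 1"
    using exp_ge_add_one_self[of x] False by (simp add: exp_minus field_simps)
  moreover have "1 \<le> (1 + x) * (1 - x + x\<^sup>2)"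
    using False by (simp add: algebra_simps power2_eq_square power3_eq_cube)
  ultimately show ?thesis
    using False by (smt (verit) mult_le_cancel_left mult.commute)
qed

lemma sum_pmf_exp_neg_le:
  fixes f :: "'a \<Rightarrow> real"
  assumes "finite X" "set_pmf p \<subseteq> X" "\<And>x. x \<in> X \<Longrightarrow> \<bar>t * f x\<bar> \<le> 1"
  shows "(\<Sum>x\<in>X. pmf p x * exp (- t * f x))
     \<le> 1 - t * (\<Sum>x\<in>X. pmf p x * f x) + t\<^sup>2 * (\<Sum>x\<in>X. pmf p x * (f x)\<^sup>2)"
proof -
  have "(\<Sum>x\<in>X. pmf p x * exp (- t * f x)) \<le> (\<Sum>x\<in>X. pmf p x * (1 - t * f x + (t * f x)\<^sup>2))"
    using exp_neg_le_quadratic assms(3) by (intro sum_mono mult_left_mono) auto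
  also have "\<dots> = (\<Sum>x\<in>X. pmf p x) - t * (\<Sum>x\<in>X. pmf p x * f x) + t\<^sup>2 * (\<Sum>x\<in>X. pmf p x * (f x)\<^sup>2)"
    by (simp add: algebra_simps power_mult_distrib sum.distrib sum_subtractf sum_distrib_left)
  finally show ?thesis
    using sum_pmf_eq_1[OF assms(1,2)] by simp
qed

lemma diff_squares_bounds:
  fixes a b y v :: real
  assumes "0 \<le> a" "a \<le> v" "0 \<le> b" "b \<le> 2 * v" "- v \<le> y" "y \<le> 2 * v"
  shows "\<bar>(a - y)\<^sup>2 - (b - y)\<^sup>2\<bar> \<le> 12 * v\<^sup>2"
    and "((a - y)\<^sup>2 - (b - y)\<^sup>2)\<^sup>2 \<le> 36 * v\<^sup>2 * (a - b)\<^sup>2"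
proof -
  have factor: "(a - y)\<^sup>2 - (b - y)\<^sup>2 = (a - b) * (a + b - 2 * y)"
    by (simp add: power2_eq_square algebra_simps)
  have ab: "\<bar>a - b\<bar> \<le> 2 * v" and sum: "\<bar>a + b - 2 * y\<bar> \<le> 6 * v"
    using assms by auto
  have "\<bar>a - b\<bar> * \<bar>a + b - 2 * y\<bar> \<le> (2 * v) * (6 * v)"
    using ab sum assms by (intro mult_mono) auto
  then show "\<bar>(a - y)\<^sup>2 - (b - y)\<^sup>2\<bar> \<le> 12 * v\<^sup>2"
    unfolding factor abs_mult by (simp add: power2_eq_square)
  have "(a + b - 2 * y)\<^sup>2 \<le> (6 * v)\<^sup>2"
    using sum abs_le_square_iff by fastforce
  then have "(a - b)\<^sup>2 * (a + b - 2 * y)\<^sup>2 \<le> (a - b)\<^sup>2 * (6 * v)\<^sup>2"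
    by (rule mult_left_mono) simp
  then show "((a - y)\<^sup>2 - (b - y)\<^sup>2)\<^sup>2 \<le> 36 * v\<^sup>2 * (a - b)\<^sup>2"
    unfolding factor by (simp add: power_mult_distrib mult.commute)
qed

lemma sum_weighted_diff_squares:
  fixes p y :: "'a \<Rightarrow> real"
  assumes "(\<Sum>x\<in>X. p x) = 1"
  shows "(\<Sum>x\<in>X. p x * ((a - y x)\<^sup>2 - (b - y x)\<^sup>2)) = (a - b) * (a + b - 2 * (\<Sum>x\<in>X. p x * y x))"
proof -
  have "(\<Sum>x\<in>X. p x * ((a - y x)\<^sup>2 - (b - y x)\<^sup>2))
      = (\<Sum>x\<in>X. (a - b) * (a + b) * p x - 2 * (a - b) * (p x * y x))"
    by (intro sum.cong) (simp_all add: power2_eq_square algebra_simps)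
  also have "\<dots> = (a - b) * (a + b) * (\<Sum>x\<in>X. p x) - 2 * (a - b) * (\<Sum>x\<in>X. p x * y x)"
    by (simp add: sum_subtractf sum_distrib_left)
  finally show ?thesis
    using assms by (simp add: algebra_simps)
qed

text \<open>The hypothesis that d vanishes where mu does makes the junk value d x / 0 = 0 harmless.\<close>

lemma norm2_mu_cauchy_schwarz:
  assumes "finite X" "set_pmf \<mu> \<subseteq> X"
    and abs_cont: "\<And>x. x \<in> X \<Longrightarrow> pmf \<mu> x = 0 \<Longrightarrow> d x = 0"
  shows "\<bar>\<Sum>x\<in>X. d x * h x\<bar> \<le> sqrt (norm2_mu \<mu> (\<lambda>x. d x / pmf \<mu> x)) * sqrt (norm2_mu \<mu> h)"
proof -
  define a where "a x = sqrt (pmf \<mu> x) * (d x / pmf \<mu> x)" for x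
  define b where "b x = sqrt (pmf \<mu> x) * h x" for x
  have ab: "d x * h x = a x * b x" if "x \<in> X" for x
  proof (cases "pmf \<mu> x = 0")
    case False
    then have "0 < pmf \<mu> x" using pmf_nonneg[of \<mu> x] by linarith
    then show ?thesis unfolding a_def b_def by (simp add: field_simps)
  qed (simp add: abs_cont[OF that] a_def b_def)
  have a2: "(a x)\<^sup>2 = pmf \<mu> x * (d x / pmf \<mu> x)\<^sup>2" and b2: "(b x)\<^sup>2 = pmf \<mu> x * (h x)\<^sup>2" for x
    unfolding a_def b_def by (simp_all only: power_mult_distrib real_sqrt_pow2[OF pmf_nonneg])
  have "(\<Sum>x\<in>X. d x * h x)\<^sup>2 = (\<Sum>x\<in>X. a x * b x)\<^sup>2"
    using ab by simp
  also have "\<dots> \<le> (\<Sum>x\<in>X. (a x)\<^sup>2) * (\<Sum>x\<in>X. (b x)\<^sup>2)"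
    by (rule Cauchy_Schwarz_ineq_sum)
  also have "\<dots> = norm2_mu \<mu> (\<lambda>x. d x / pmf \<mu> x) * norm2_mu \<mu> h"
    by (simp add: norm2_mu_finite_sum[OF assms(1,2)] a2 b2)
  finally show ?thesis
    by (metis real_sqrt_abs real_sqrt_le_mono real_sqrt_mult)
qed

lemma policy_support: "policy S A \<pi> \<Longrightarrow> s \<in> S \<Longrightarrow> set_pmf (\<pi> s) \<subseteq> A"
  by (auto simp: policy_def)

section \<open>Occupancy measures and the performance-difference identity\<close>

definition state_occupancy :: "real \<Rightarrow> (nat \<Rightarrow> nat \<Rightarrow> nat pmf) \<Rightarrow> nat pmf \<Rightarrow> (nat \<Rightarrow> nat pmf) \<Rightarrow> nat \<Rightarrow> real"
  where "state_occupancy \<gamma> P d0 \<pi> s = (1 - \<gamma>) * (\<Sum>t. \<gamma> ^ t * pmf (state_pmf P d0 \<pi> t) s)"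

lemma sum_occupancy_eq_state_occupancy:
  "(\<Sum>x\<in>S \<times> A. occupancy \<gamma> P d0 \<pi> x * g x)
     = (\<Sum>s\<in>S. state_occupancy \<gamma> P d0 \<pi> s * (\<Sum>a\<in>A. pmf (\<pi> s) a * g (s, a)))"
  unfolding sum.cartesian_product'
  by (simp add: occupancy_def state_occupancy_def sum_distrib_left sum_distrib_right mult_ac)

definition bellman_residual :: "real \<Rightarrow> (nat \<Rightarrow> nat \<Rightarrow> nat pmf) \<Rightarrow> (nat \<Rightarrow> nat \<Rightarrow> real) \<Rightarrow> real
      \<Rightarrow> (nat \<Rightarrow> nat pmf) \<Rightarrow> (nat \<Rightarrow> real) \<Rightarrow> nat \<times> nat \<Rightarrow> real"
  where "bellman_residual \<gamma> P R lam \<pi> V = (\<lambda>(s, a). V s - consist \<gamma> P R lam \<pi> V (s, a))"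

locale mdp =
  fixes S A :: "nat set" and \<gamma> :: real and P :: "nat \<Rightarrow> nat \<Rightarrow> nat pmf"
    and R :: "nat \<Rightarrow> nat \<Rightarrow> real" and Rmax :: real and d0 :: "nat pmf"
  assumes finite_mdp: "finite_mdp S A \<gamma> P R Rmax d0"
begin

lemma finite_S: "finite S" and finite_A: "finite A"
  and S_nonempty: "S \<noteq> {}" and A_nonempty: "A \<noteq> {}"
  and discount_nonneg: "0 \<le> \<gamma>" and discount_less_1: "\<gamma> < 1"
  and transition_support: "s \<in> S \<Longrightarrow> a \<in> A \<Longrightarrow> set_pmf (P s a) \<subseteq> S"
  and reward_bounds: "s \<in> S \<Longrightarrow> a \<in> A \<Longrightarrow> 0 \<le> R s a \<and> R s a \<le> Rmax"
  and initial_support: "set_pmf d0 \<subseteq> S"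
  using finite_mdp by (auto simp: finite_mdp_def)

lemma state_pmf_support:
  assumes "policy S A \<pi>"
  shows "set_pmf (state_pmf P d0 \<pi> t) \<subseteq> S"
proof (induction t)
  case (Suc t)
  show ?case
  proof
    fix s' assume "s' \<in> set_pmf (state_pmf P d0 \<pi> (Suc t))"
    then obtain s a where "s \<in> set_pmf (state_pmf P d0 \<pi> t)" "a \<in> set_pmf (\<pi> s)" "s' \<in> set_pmf (P s a)"
      by auto
    then show "s' \<in> S"
      using Suc transition_support policy_support[OF assms] by blast
  qed
qed (simp add: initial_support)

lemma sum_state_pmf: "policy S A \<pi> \<Longrightarrow> (\<Sum>s\<in>S. pmf (state_pmf P d0 \<pi> t) s) = 1"
  using sum_pmf_eq_1[OF finite_S state_pmf_support] by blast

lemma sum_policy_pmf: "policy S A \<pi> \<Longrightarrow> s \<in> S \<Longrightarrow> (\<Sum>a\<in>A. pmf (\<pi> s) a) = 1"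
  using sum_pmf_eq_1[OF finite_A policy_support] by blast

lemma expectation_transition:
  "s \<in> S \<Longrightarrow> a \<in> A \<Longrightarrow> measure_pmf.expectation (P s a) V = (\<Sum>s'\<in>S. pmf (P s a) s' * V s')"
  by (rule integral_pmf_eq_finite_sum[OF finite_S transition_support])

lemma sum_state_pmf_Suc:
  assumes "policy S A \<pi>"
  shows "(\<Sum>s'\<in>S. pmf (state_pmf P d0 \<pi> (Suc t)) s' * V s') =
     (\<Sum>s\<in>S. pmf (state_pmf P d0 \<pi> t) s * (\<Sum>a\<in>A. pmf (\<pi> s) a * (\<Sum>s'\<in>S. pmf (P s a) s' * V s')))"
proof -
  have pmf_Suc: "pmf (state_pmf P d0 \<pi> (Suc t)) s' =
     (\<Sum>s\<in>S. pmf (state_pmf P d0 \<pi> t) s * (\<Sum>a\<in>A. pmf (\<pi> s) a * pmf (P s a) s'))" for s'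
    by (simp add: pmf_bind integral_pmf_eq_finite_sum[OF finite_S state_pmf_support[OF assms]]
        integral_pmf_eq_finite_sum[OF finite_A policy_support[OF assms]] cong: sum.cong)
  have "(\<Sum>s'\<in>S. pmf (state_pmf P d0 \<pi> (Suc t)) s' * V s') =
     (\<Sum>s'\<in>S. \<Sum>s\<in>S. \<Sum>a\<in>A. pmf (state_pmf P d0 \<pi> t) s * pmf (\<pi> s) a * pmf (P s a) s' * V s')"
    unfolding pmf_Suc by (simp add: sum_distrib_left sum_distrib_right mult.assoc)
  also have "\<dots> = (\<Sum>s\<in>S. \<Sum>a\<in>A. \<Sum>s'\<in>S. pmf (state_pmf P d0 \<pi> t) s * pmf (\<pi> s) a * pmf (P s a) s' * V s')"
    by (subst sum.swap) (simp add: sum.swap[of _ S A])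
  finally show ?thesis
    by (simp add: sum_distrib_left mult.assoc)
qed

lemma summable_discounted:
  fixes f :: "nat \<Rightarrow> real"
  assumes "\<And>t. \<bar>f t\<bar> \<le> B"
  shows "summable (\<lambda>t. \<gamma> ^ t * f t)"
proof (rule summable_comparison_test)
  show "\<exists>N. \<forall>t\<ge>N. norm (\<gamma> ^ t * f t) \<le> \<gamma> ^ t * B"
    using assms discount_nonneg by (auto simp: abs_mult intro!: mult_left_mono)
  show "summable (\<lambda>t. \<gamma> ^ t * B)"
    using discount_nonneg discount_less_1 by (intro summable_mult2 summable_geometric) simp
qed

lemma discounted_state_series:
  "(\<Sum>t. \<gamma> ^ t * (\<Sum>s\<in>S. pmf (state_pmf P d0 \<pi> t) s * f s))
     = (\<Sum>s\<in>S. state_occupancy \<gamma> P d0 \<pi> s * f s) / (1 - \<gamma>)"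
proof -
  have "(\<lambda>t. \<gamma> ^ t * pmf (state_pmf P d0 \<pi> t) s) sums (state_occupancy \<gamma> P d0 \<pi> s / (1 - \<gamma>))" for s
    using summable_discounted[of "\<lambda>t. pmf (state_pmf P d0 \<pi> t) s" 1] discount_less_1
    by (simp add: state_occupancy_def pmf_le_1 summable_sums)
  then have "(\<lambda>t. \<Sum>s\<in>S. \<gamma> ^ t * pmf (state_pmf P d0 \<pi> t) s * f s)
      sums (\<Sum>s\<in>S. state_occupancy \<gamma> P d0 \<pi> s / (1 - \<gamma>) * f s)"
    by (intro sums_sum sums_mult2)
  then show ?thesis
    by (simp add: sums_iff sum_distrib_left sum_divide_distrib mult_ac)
qed

lemma state_occupancy_nonneg: "0 \<le> state_occupancy \<gamma> P d0 \<pi> s"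
  using summable_discounted[of "\<lambda>t. pmf (state_pmf P d0 \<pi> t) s" 1] discount_nonneg discount_less_1
  unfolding state_occupancy_def by (intro mult_nonneg_nonneg suminf_nonneg) (auto simp: pmf_le_1)

lemma sum_state_occupancy:
  assumes "policy S A \<pi>"
  shows "(\<Sum>s\<in>S. state_occupancy \<gamma> P d0 \<pi> s) = 1"
proof -
  have "(\<Sum>s\<in>S. state_occupancy \<gamma> P d0 \<pi> s) / (1 - \<gamma>) = (\<Sum>t. \<gamma> ^ t)"
    using discounted_state_series[of \<pi> "\<lambda>_. 1"] sum_state_pmf[OF assms] by simp
  also have "\<dots> = 1 / (1 - \<gamma>)"
    using discount_nonneg discount_less_1 by (simp add: suminf_geometric)
  finally show ?thesis
    using discount_less_1 by (simp add: divide_eq_eq)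
qed

lemma state_occupancy_flow:
  assumes "policy S A \<pi>"
  shows "(\<Sum>s\<in>S. state_occupancy \<gamma> P d0 \<pi> s * V s)
     = (1 - \<gamma>) * (\<Sum>s\<in>S. pmf d0 s * V s)
       + \<gamma> * (\<Sum>s\<in>S. state_occupancy \<gamma> P d0 \<pi> s * (\<Sum>a\<in>A. pmf (\<pi> s) a * (\<Sum>s'\<in>S. pmf (P s a) s' * V s')))"
proof -
  define b where "b t = (\<Sum>s\<in>S. pmf (state_pmf P d0 \<pi> t) s * V s)" for t
  have summable: "summable (\<lambda>t. \<gamma> ^ t * b (t + k))" for k
    unfolding b_def by (rule summable_discounted[OF abs_pmf_weighted_sum_le[OF finite_S]])
  define x where "x = (\<Sum>t. \<gamma> ^ t * b t)"
  define y where "y = (\<Sum>t. \<gamma> ^ t * b (Suc t))"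
  have "x = b 0 + (\<Sum>t. \<gamma> * (\<gamma> ^ t * b (Suc t)))"
    unfolding x_def using suminf_split_head[OF summable[of 0]] by (simp add: mult.assoc)
  also have "\<dots> = b 0 + \<gamma> * y"
    unfolding y_def using suminf_mult[OF summable[of 1]] by simp
  finally have split: "x = b 0 + \<gamma> * y" .
  have "x = (\<Sum>s\<in>S. state_occupancy \<gamma> P d0 \<pi> s * V s) / (1 - \<gamma>)"
    unfolding x_def b_def by (rule discounted_state_series)
  then have occ_V: "(\<Sum>s\<in>S. state_occupancy \<gamma> P d0 \<pi> s * V s) = (1 - \<gamma>) * x"
    using discount_less_1 by (simp add: field_simps)
  have "y = (\<Sum>s\<in>S. state_occupancy \<gamma> P d0 \<pi> s * (\<Sum>a\<in>A. pmf (\<pi> s) a * (\<Sum>s'\<in>S. pmf (P s a) s' * V s'))) / (1 - \<gamma>)"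
    unfolding y_def b_def sum_state_pmf_Suc[OF assms] by (rule discounted_state_series)
  then have occ_PV: "(\<Sum>s\<in>S. state_occupancy \<gamma> P d0 \<pi> s * (\<Sum>a\<in>A. pmf (\<pi> s) a * (\<Sum>s'\<in>S. pmf (P s a) s' * V s')))
      = (1 - \<gamma>) * y"
    using discount_less_1 by (simp add: field_simps)
  have "b 0 = (\<Sum>s\<in>S. pmf d0 s * V s)"
    by (simp add: b_def)
  then show ?thesis
    unfolding occ_V occ_PV split by (simp add: algebra_simps)
qed

lemma J_reg_state_occupancy:
  assumes "policy S A \<pi>"
  shows "J_reg \<gamma> P R d0 lam \<pi>
     = (\<Sum>s\<in>S. state_occupancy \<gamma> P d0 \<pi> s * (\<Sum>a\<in>A. pmf (\<pi> s) a * (R s a - lam * ln (pmf (\<pi> s) a)))) / (1 - \<gamma>)"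
proof -
  have "J_reg \<gamma> P R d0 lam \<pi> = (\<Sum>t. \<gamma> ^ t * (\<Sum>s\<in>S. pmf (state_pmf P d0 \<pi> t) s *
      (\<Sum>a\<in>A. pmf (\<pi> s) a * (R s a - lam * ln (pmf (\<pi> s) a)))))"
    unfolding J_reg_def
    by (simp add: integral_pmf_eq_finite_sum[OF finite_S state_pmf_support[OF assms]]
        integral_pmf_eq_finite_sum[OF finite_A policy_support[OF assms]] cong: sum.cong)
  then show ?thesis
    by (simp add: discounted_state_series)
qed

lemma J_reg_eq_J_ret_plus_entropy:
  assumes "policy S A \<pi>"
  shows "J_reg \<gamma> P R d0 lam \<pi> = J_ret \<gamma> P R d0 \<pi>
     + lam * (\<Sum>s\<in>S. state_occupancy \<gamma> P d0 \<pi> s * - (\<Sum>a\<in>A. pmf (\<pi> s) a * ln (pmf (\<pi> s) a))) / (1 - \<gamma>)"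
  unfolding J_ret_def J_reg_state_occupancy[OF assms]
  by (simp add: add_divide_distrib[symmetric] sum_distrib_left sum_subtractf sum_negf algebra_simps)

lemma J_reg_deterministic:
  assumes "deterministic_policy S A \<pi>"
  shows "J_reg \<gamma> P R d0 lam \<pi> = J_ret \<gamma> P R d0 \<pi>"
proof -
  have "(\<Sum>a\<in>A. pmf (\<pi> s) a * ln (pmf (\<pi> s) a)) = 0" if s: "s \<in> S" for s
  proof -
    obtain a0 where "\<pi> s = return_pmf a0"
      using assms s by (auto simp: deterministic_policy_def)
    then show ?thesis by (intro sum.neutral) (simp add: indicator_def)
  qed
  then show ?thesis
    using assms by (simp add: J_reg_eq_J_ret_plus_entropy deterministic_policy_def)
qed

lemma J_reg_le_J_ret_plus_ln_card:
  assumes "policy S A \<pi>" "0 \<le> lam"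
  shows "J_reg \<gamma> P R d0 lam \<pi> \<le> J_ret \<gamma> P R d0 \<pi> + lam * ln (real (card A)) / (1 - \<gamma>)"
proof -
  have "(\<Sum>s\<in>S. state_occupancy \<gamma> P d0 \<pi> s * - (\<Sum>a\<in>A. pmf (\<pi> s) a * ln (pmf (\<pi> s) a)))
      \<le> (\<Sum>s\<in>S. state_occupancy \<gamma> P d0 \<pi> s * ln (real (card A)))"
    using entropy_le_ln_card[OF finite_A] sum_policy_pmf[OF assms(1)]
    by (intro sum_mono mult_left_mono state_occupancy_nonneg) auto
  also have "\<dots> = ln (real (card A))"
    by (simp add: sum_distrib_right[symmetric] sum_state_occupancy[OF assms(1)])
  finally show ?thesis
    using assms discount_less_1
    by (simp add: J_reg_eq_J_ret_plus_entropy divide_right_mono mult_left_mono)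
qed

lemma J_reg_eq_initial_value_minus_residual:
  assumes "policy S A \<pi>"
  shows "J_reg \<gamma> P R d0 lam \<pi> = (\<Sum>s\<in>S. pmf d0 s * V s)
     - (\<Sum>x\<in>S \<times> A. occupancy \<gamma> P d0 \<pi> x * bellman_residual \<gamma> P R lam \<pi> V x) / (1 - \<gamma>)"
proof -
  define d where "d = state_occupancy \<gamma> P d0 \<pi>"
  define PV where "PV s a = (\<Sum>s'\<in>S. pmf (P s a) s' * V s')" for s a
  define r where "r s a = R s a - lam * ln (pmf (\<pi> s) a)" for s a
  have inner: "(\<Sum>a\<in>A. pmf (\<pi> s) a * bellman_residual \<gamma> P R lam \<pi> V (s, a))
      = V s - (\<Sum>a\<in>A. pmf (\<pi> s) a * r s a) - \<gamma> * (\<Sum>a\<in>A. pmf (\<pi> s) a * PV s a)" if s: "s \<in> S" for s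
  proof -
    have "pmf (\<pi> s) a * bellman_residual \<gamma> P R lam \<pi> V (s, a)
        = V s * pmf (\<pi> s) a - pmf (\<pi> s) a * r s a - \<gamma> * (pmf (\<pi> s) a * PV s a)" if "a \<in> A" for a
      using expectation_transition[OF s that]
      by (simp add: bellman_residual_def consist_def r_def PV_def algebra_simps)
    then have "(\<Sum>a\<in>A. pmf (\<pi> s) a * bellman_residual \<gamma> P R lam \<pi> V (s, a))
        = (\<Sum>a\<in>A. V s * pmf (\<pi> s) a - pmf (\<pi> s) a * r s a - \<gamma> * (pmf (\<pi> s) a * PV s a))"
      by (rule sum.cong[OF refl])
    also have "\<dots> = V s * (\<Sum>a\<in>A. pmf (\<pi> s) a) - (\<Sum>a\<in>A. pmf (\<pi> s) a * r s a)
        - \<gamma> * (\<Sum>a\<in>A. pmf (\<pi> s) a * PV s a)"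
      by (simp add: sum_subtractf sum_distrib_left)
    finally show ?thesis
      using sum_policy_pmf[OF assms s] by simp
  qed
  have "(\<Sum>x\<in>S \<times> A. occupancy \<gamma> P d0 \<pi> x * bellman_residual \<gamma> P R lam \<pi> V x)
      = (\<Sum>s\<in>S. d s * (\<Sum>a\<in>A. pmf (\<pi> s) a * bellman_residual \<gamma> P R lam \<pi> V (s, a)))"
    unfolding d_def by (rule sum_occupancy_eq_state_occupancy)
  also have "\<dots> = (\<Sum>s\<in>S. d s * V s) - (\<Sum>s\<in>S. d s * (\<Sum>a\<in>A. pmf (\<pi> s) a * r s a))
      - \<gamma> * (\<Sum>s\<in>S. d s * (\<Sum>a\<in>A. pmf (\<pi> s) a * PV s a))"
    by (simp add: inner algebra_simps sum_subtractf sum.distrib sum_distrib_left cong: sum.cong)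
  also have "\<dots> = (1 - \<gamma>) * ((\<Sum>s\<in>S. pmf d0 s * V s) - J_reg \<gamma> P R d0 lam \<pi>)"
    using state_occupancy_flow[OF assms, of V] J_reg_state_occupancy[OF assms, of lam] discount_less_1
    by (simp add: d_def PV_def r_def field_simps)
  finally show ?thesis
    using discount_less_1 by (simp add: field_simps)
qed

text \<open>Under d^pi', the two residuals differ at each state by lam times KL(pi' s, pi s).\<close>

lemma residual_le_residual_of_weighting_policy:
  assumes "policy S A \<pi>'" "policy S A \<pi>" "\<And>s a. s \<in> S \<Longrightarrow> a \<in> A \<Longrightarrow> 0 < pmf (\<pi> s) a" "0 \<le> lam"
  shows "(\<Sum>x\<in>S \<times> A. occupancy \<gamma> P d0 \<pi>' x * bellman_residual \<gamma> P R lam \<pi> V x)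
       \<le> (\<Sum>x\<in>S \<times> A. occupancy \<gamma> P d0 \<pi>' x * bellman_residual \<gamma> P R lam \<pi>' V x)"
proof -
  have per_state: "(\<Sum>a\<in>A. pmf (\<pi>' s) a * bellman_residual \<gamma> P R lam \<pi> V (s, a))
      \<le> (\<Sum>a\<in>A. pmf (\<pi>' s) a * bellman_residual \<gamma> P R lam \<pi>' V (s, a))" if s: "s \<in> S" for s
  proof -
    have "0 \<le> lam * (\<Sum>a\<in>A. pmf (\<pi>' s) a * (ln (pmf (\<pi>' s) a) - ln (pmf (\<pi> s) a)))"
      using assms s by (intro mult_nonneg_nonneg gibbs_inequality[OF finite_A]) (auto simp: sum_policy_pmf)
    then show ?thesis
      by (simp add: bellman_residual_def consist_def algebra_simps sum_subtractf sum.distrib sum_distrib_left)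
  qed
  show ?thesis
    unfolding sum_occupancy_eq_state_occupancy
    by (rule sum_mono, rule mult_left_mono[OF per_state state_occupancy_nonneg])
qed

lemma J_ret_suboptimality_le_residuals:
  assumes det: "deterministic_policy S A pistar"
    and pol_lam: "policy S A pistar_lam"
    and opt_lam: "J_reg \<gamma> P R d0 lam pistar \<le> J_reg \<gamma> P R d0 lam pistar_lam"
    and pol: "policy S A \<pi>" and pos: "\<And>s a. s \<in> S \<Longrightarrow> a \<in> A \<Longrightarrow> 0 < pmf (\<pi> s) a"
    and lam: "0 \<le> lam"
    and res_lam: "\<bar>\<Sum>x\<in>S \<times> A. occupancy \<gamma> P d0 pistar_lam x * bellman_residual \<gamma> P R lam \<pi> V x\<bar> \<le> \<eta>"
    and res_own: "\<bar>\<Sum>x\<in>S \<times> A. occupancy \<gamma> P d0 \<pi> x * bellman_residual \<gamma> P R lam \<pi> V x\<bar> \<le> \<eta>"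
  shows "J_ret \<gamma> P R d0 pistar - J_ret \<gamma> P R d0 \<pi> \<le> (2 * \<eta> + lam * ln (real (card A))) / (1 - \<gamma>)"
proof -
  define b where "b = (\<Sum>s\<in>S. pmf d0 s * V s)"
  define e where "e \<pi>' \<pi>'' = (\<Sum>x\<in>S \<times> A. occupancy \<gamma> P d0 \<pi>' x * bellman_residual \<gamma> P R lam \<pi>'' V x)"
    for \<pi>' \<pi>''
  have "J_ret \<gamma> P R d0 pistar = J_reg \<gamma> P R d0 lam pistar"
    using J_reg_deterministic[OF det] by simp
  also have "\<dots> \<le> J_reg \<gamma> P R d0 lam pistar_lam"
    by (rule opt_lam)
  also have "\<dots> = b - e pistar_lam pistar_lam / (1 - \<gamma>)"
    unfolding b_def e_def by (rule J_reg_eq_initial_value_minus_residual[OF pol_lam])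
  also have "\<dots> \<le> b - e pistar_lam \<pi> / (1 - \<gamma>)"
    using residual_le_residual_of_weighting_policy[OF pol_lam pol pos lam] discount_less_1
    unfolding e_def by (simp add: divide_right_mono)
  finally have upper: "J_ret \<gamma> P R d0 pistar \<le> b - e pistar_lam \<pi> / (1 - \<gamma>)" .
  have lower: "b - e \<pi> \<pi> / (1 - \<gamma>) \<le> J_ret \<gamma> P R d0 \<pi> + lam * ln (real (card A)) / (1 - \<gamma>)"
    using J_reg_le_J_ret_plus_ln_card[OF pol lam] J_reg_eq_initial_value_minus_residual[OF pol]
    unfolding b_def e_def by simp
  have "e \<pi> \<pi> - e pistar_lam \<pi> + lam * ln (real (card A)) \<le> 2 * \<eta> + lam * ln (real (card A))"
    using res_lam res_own unfolding e_def by linarith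
  then have "(e \<pi> \<pi> - e pistar_lam \<pi> + lam * ln (real (card A))) / (1 - \<gamma>)
      \<le> (2 * \<eta> + lam * ln (real (card A))) / (1 - \<gamma>)"
    using discount_less_1 by (simp add: divide_right_mono)
  then show ?thesis
    using upper lower by (simp add: add_divide_distrib diff_divide_distrib)
qed

lemma nn_integral_sample_pmf:
  assumes "set_pmf \<mu> \<subseteq> S \<times> A" "\<And>x. 0 \<le> f x"
  shows "(\<integral>\<^sup>+x. ennreal (f x) \<partial>measure_pmf (sample_pmf \<mu> P))
     = ennreal (\<Sum>(s, a)\<in>S \<times> A. pmf \<mu> (s, a) * (\<Sum>s'\<in>S. pmf (P s a) s' * f (s, a, s')))"
proof -
  have inner: "(\<integral>\<^sup>+s'. ennreal (f (s, a, s')) \<partial>measure_pmf (P s a))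
      = ennreal (\<Sum>s'\<in>S. pmf (P s a) s' * f (s, a, s'))"
    if "(s, a) \<in> S \<times> A" for s a
  proof -
    have "(\<integral>\<^sup>+s'. ennreal (f (s, a, s')) \<partial>measure_pmf (P s a))
        = (\<Sum>s'\<in>S. ennreal (f (s, a, s')) * pmf (P s a) s')"
      using that transition_support by (intro nn_integral_measure_pmf_support finite_S) auto
    then show ?thesis
      using assms(2) by (simp add: ennreal_mult[symmetric] sum_ennreal mult.commute)
  qed
  have "(\<integral>\<^sup>+x. ennreal (f x) \<partial>measure_pmf (sample_pmf \<mu> P))
     = (\<integral>\<^sup>+(s, a). (\<integral>\<^sup>+s'. ennreal (f (s, a, s')) \<partial>measure_pmf (P s a)) \<partial>measure_pmf \<mu>)"
    unfolding sample_pmf_def by (simp add: split_beta')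
  also have "\<dots> = (\<Sum>(s, a)\<in>S \<times> A. (\<integral>\<^sup>+s'. ennreal (f (s, a, s')) \<partial>measure_pmf (P s a)) * pmf \<mu> (s, a))"
    using assms(1) finite_S finite_A
    by (subst nn_integral_measure_pmf_support[of "S \<times> A"]) (auto simp: split_beta')
  also have "\<dots> = ennreal (\<Sum>(s, a)\<in>S \<times> A. pmf \<mu> (s, a) * (\<Sum>s'\<in>S. pmf (P s a) s' * f (s, a, s')))"
    using assms(2) by (simp add: inner ennreal_mult[symmetric] sum_ennreal sum_nonneg mult.commute
        split_beta' cong: sum.cong)
  finally show ?thesis .
qed

end

section \<open>Concentration over i.i.d. datasets\<close>

lemma nn_integral_dataset_exp_sum:
  fixes U :: "nat \<times> nat \<times> nat \<Rightarrow> real"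
  shows "(\<integral>\<^sup>+D. ennreal (exp (- t * sum_list (map U D))) \<partial>measure_pmf (dataset_pmf \<mu> P n))
      = (\<integral>\<^sup>+x. ennreal (exp (- t * U x)) \<partial>measure_pmf (sample_pmf \<mu> P)) ^ n"
proof (induction n)
  case (Suc n)
  have "ennreal (exp (- t * (U x + u))) = ennreal (exp (- t * U x)) * ennreal (exp (- t * u))" for x u
    by (simp add: ennreal_mult[symmetric] exp_add[symmetric] algebra_simps)
  then have "(\<integral>\<^sup>+D. ennreal (exp (- t * sum_list (map U D))) \<partial>measure_pmf (dataset_pmf \<mu> P (Suc n)))
     = (\<integral>\<^sup>+x. ennreal (exp (- t * U x))
          * (\<integral>\<^sup>+D. ennreal (exp (- t * sum_list (map U D))) \<partial>measure_pmf (dataset_pmf \<mu> P n))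
        \<partial>measure_pmf (sample_pmf \<mu> P))"
    by (simp add: nn_integral_cmult)
  then show ?case
    using Suc by (simp add: nn_integral_multc mult.commute)
qed simp

lemma prob_dataset_sum_nonpos_le:
  fixes U :: "nat \<times> nat \<times> nat \<Rightarrow> real"
  assumes "0 \<le> t" "0 \<le> m"
    and mgf: "(\<integral>\<^sup>+x. ennreal (exp (- t * U x)) \<partial>measure_pmf (sample_pmf \<mu> P)) \<le> ennreal m"
  shows "measure_pmf.prob (dataset_pmf \<mu> P n) {D. sum_list (map U D) \<le> 0} \<le> m ^ n"
proof -
  let ?B = "{D. sum_list (map U D) \<le> 0}"
  have "indicator ?B D \<le> ennreal (exp (- t * sum_list (map U D)))" for D
    using assms(1) by (auto simp: indicator_def mult_nonneg_nonpos)
  then have "emeasure (measure_pmf (dataset_pmf \<mu> P n)) ?B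
      \<le> (\<integral>\<^sup>+D. ennreal (exp (- t * sum_list (map U D))) \<partial>measure_pmf (dataset_pmf \<mu> P n))"
    by (simp add: nn_integral_mono flip: nn_integral_indicator)
  also have "\<dots> \<le> ennreal m ^ n"
    unfolding nn_integral_dataset_exp_sum using mgf by (rule power_mono) simp
  also have "\<dots> = ennreal (m ^ n)"
    using assms(2) by (simp add: ennreal_power)
  finally show ?thesis
    using assms(2) by (simp add: measure_pmf.emeasure_eq_measure)
qed

section \<open>The SBEED objective\<close>

definition td_target :: "real \<Rightarrow> (nat \<Rightarrow> nat \<Rightarrow> real) \<Rightarrow> real \<Rightarrow> (nat \<Rightarrow> real) \<Rightarrow> (nat \<Rightarrow> nat pmf)
      \<Rightarrow> nat \<times> nat \<times> nat \<Rightarrow> real"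
  where "td_target \<gamma> R lam V \<pi> = (\<lambda>(s, a, s'). R s a + \<gamma> * V s' - lam * ln (pmf (\<pi> s) a))"

definition loss_gap :: "real \<Rightarrow> (nat \<Rightarrow> nat \<Rightarrow> real) \<Rightarrow> real \<Rightarrow> (nat \<Rightarrow> real) \<Rightarrow> (nat \<Rightarrow> nat pmf)
      \<Rightarrow> (nat \<times> nat \<Rightarrow> real) \<Rightarrow> nat \<times> nat \<times> nat \<Rightarrow> real"
  where "loss_gap \<gamma> R lam V \<pi> g = (\<lambda>(s, a, s').
     (V s - td_target \<gamma> R lam V \<pi> (s, a, s'))\<^sup>2 - (g (s, a) - td_target \<gamma> R lam V \<pi> (s, a, s'))\<^sup>2)"

lemma loss_L_minus_loss_R:
  "loss_L \<gamma> R lam D V \<pi> - loss_R \<gamma> R lam D g V \<pi>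
     = sum_list (map (loss_gap \<gamma> R lam V \<pi> g) D) / real (length D)"
proof -
  have "sum_list (map (loss_gap \<gamma> R lam V \<pi> g) D)
     = (\<Sum>(s, a, s')\<leftarrow>D. (V s - R s a - \<gamma> * V s' + lam * ln (pmf (\<pi> s) a))\<^sup>2)
       - (\<Sum>(s, a, s')\<leftarrow>D. (g (s, a) - R s a - \<gamma> * V s' + lam * ln (pmf (\<pi> s) a))\<^sup>2)"
    by (induction D) (auto simp: loss_gap_def td_target_def algebra_simps)
  then show ?thesis
    unfolding loss_L_def loss_R_def by (simp add: diff_divide_distrib)
qed

lemma sbeed_output_loss_gap_le:
  assumes "sbeed_output \<gamma> R lam Vc Pc Gc D V \<pi>" "V' \<in> Vc" "\<pi>' \<in> Pc" "g \<in> Gc" "finite Gc"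
  shows "\<exists>g'\<in>Gc. sum_list (map (loss_gap \<gamma> R lam V \<pi> g) D) \<le> sum_list (map (loss_gap \<gamma> R lam V' \<pi>' g') D)"
proof -
  define obj where "obj V \<pi> g = sum_list (map (loss_gap \<gamma> R lam V \<pi> g) D) / real (length D)" for V \<pi> g
  have sbeed_obj: "sbeed_obj \<gamma> R lam Gc D V \<pi> = Max (obj V \<pi> ` Gc)" for V \<pi>
    unfolding sbeed_obj_def loss_L_minus_loss_R obj_def ..
  have "Max (obj V' \<pi>' ` Gc) \<in> obj V' \<pi>' ` Gc"
    using assms(4,5) by (intro Max_in) auto
  then obtain g' where g': "g' \<in> Gc" "sbeed_obj \<gamma> R lam Gc D V' \<pi>' = obj V' \<pi>' g'"
    unfolding sbeed_obj by auto
  have "obj V \<pi> g \<le> sbeed_obj \<gamma> R lam Gc D V \<pi>"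
    unfolding sbeed_obj using assms(4,5) by (intro Max_ge) auto
  also have "\<dots> \<le> sbeed_obj \<gamma> R lam Gc D V' \<pi>'"
    using assms(1-3) unfolding sbeed_output_def by blast
  finally have "obj V \<pi> g \<le> obj V' \<pi>' g'"
    using g' by simp
  then show ?thesis
    using g' by (cases "D = []") (auto simp: obj_def divide_le_cancel)
qed

locale sbeed = mdp +
  fixes \<mu> :: "(nat \<times> nat) pmf" and lam :: real and Vc :: "(nat \<Rightarrow> real) set"
    and Pc :: "(nat \<Rightarrow> nat pmf) set" and Gc :: "(nat \<times> nat \<Rightarrow> real) set"
  assumes data_support: "set_pmf \<mu> \<subseteq> S \<times> A"
    and classes: "function_classes S A (Vmax A \<gamma> Rmax lam) lam Vc Pc Gc"
    and lam_pos: "0 < lam"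
begin

abbreviation vmax :: real where "vmax \<equiv> Vmax A \<gamma> Rmax lam"

lemma finite_Vc: "finite Vc" and finite_Pc: "finite Pc" and finite_Gc: "finite Gc"
  and Vc_nonempty: "Vc \<noteq> {}" and Pc_nonempty: "Pc \<noteq> {}" and Gc_nonempty: "Gc \<noteq> {}"
  and value_bounds: "V \<in> Vc \<Longrightarrow> s \<in> S \<Longrightarrow> 0 \<le> V s \<and> V s \<le> vmax"
  and policy_class: "\<pi> \<in> Pc \<Longrightarrow> policy S A \<pi>"
  and policy_pos: "\<pi> \<in> Pc \<Longrightarrow> s \<in> S \<Longrightarrow> a \<in> A \<Longrightarrow> 0 < pmf (\<pi> s) a"
  and critic_bounds: "g \<in> Gc \<Longrightarrow> x \<in> S \<times> A \<Longrightarrow> 0 \<le> g x \<and> g x \<le> 2 * vmax"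
  using classes by (auto simp: function_classes_def)

lemma log_policy_bound:
  assumes "\<pi> \<in> Pc" "s \<in> S" "a \<in> A"
  shows "\<bar>lam * ln (pmf (\<pi> s) a)\<bar> \<le> vmax"
proof -
  have "\<bar>ln (pmf (\<pi> s) a)\<bar> \<le> vmax / lam"
    using classes assms by (auto simp: function_classes_def)
  then show ?thesis
    using lam_pos by (simp add: abs_mult field_simps)
qed

lemma reward_le_vmax: "Rmax \<le> (1 - \<gamma>) * vmax"
  and vmax_nonneg: "0 \<le> vmax"
proof -
  obtain s a where "s \<in> S" "a \<in> A"
    using S_nonempty A_nonempty by blast
  then have "0 \<le> Rmax"
    using reward_bounds by force
  moreover have "0 \<le> ln (real (card A))"
    using finite_A A_nonempty by (simp add: Suc_leI card_gt_0_iff)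
  ultimately show "Rmax \<le> (1 - \<gamma>) * vmax" "0 \<le> vmax"
    using lam_pos discount_less_1 by (simp_all add: Vmax_def)
qed

lemma td_target_bounds:
  assumes "V \<in> Vc" "\<pi> \<in> Pc" "s \<in> S" "a \<in> A" "s' \<in> S"
  shows "- vmax \<le> td_target \<gamma> R lam V \<pi> (s, a, s') \<and> td_target \<gamma> R lam V \<pi> (s, a, s') \<le> 2 * vmax"
proof -
  have "0 \<le> \<gamma> * V s'" "\<gamma> * V s' \<le> \<gamma> * vmax"
    using value_bounds[OF assms(1,5)] discount_nonneg by (auto intro: mult_left_mono)
  then show ?thesis
    using reward_bounds[OF assms(3,4)] reward_le_vmax log_policy_bound[OF assms(2-4)]
    by (auto simp: td_target_def abs_le_iff algebra_simps)
qed

lemma loss_gap_bounds: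
  assumes "V \<in> Vc" "\<pi> \<in> Pc" "g \<in> Gc" "s \<in> S" "a \<in> A" "s' \<in> S"
  shows "\<bar>loss_gap \<gamma> R lam V \<pi> g (s, a, s')\<bar> \<le> 12 * vmax\<^sup>2"
    and "(loss_gap \<gamma> R lam V \<pi> g (s, a, s'))\<^sup>2 \<le> 36 * vmax\<^sup>2 * (V s - g (s, a))\<^sup>2"
  using diff_squares_bounds[of "V s" vmax "g (s, a)" "td_target \<gamma> R lam V \<pi> (s, a, s')"]
    value_bounds[OF assms(1,4)] critic_bounds[OF assms(3), of "(s, a)"]
    td_target_bounds[OF assms(1,2,4-6)] assms(4,5)
  by (auto simp: loss_gap_def)

lemma expected_loss_gap:
  assumes "s \<in> S" "a \<in> A"
  shows "(\<Sum>s'\<in>S. pmf (P s a) s' * loss_gap \<gamma> R lam V \<pi> g (s, a, s'))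
     = (V s - g (s, a)) * (V s + g (s, a) - 2 * consist \<gamma> P R lam \<pi> V (s, a))"
proof -
  have sum1: "(\<Sum>s'\<in>S. pmf (P s a) s') = 1"
    using sum_pmf_eq_1[OF finite_S transition_support[OF assms]] .
  have "(\<Sum>s'\<in>S. pmf (P s a) s' * td_target \<gamma> R lam V \<pi> (s, a, s'))
      = (\<Sum>s'\<in>S. pmf (P s a) s') * (R s a - lam * ln (pmf (\<pi> s) a)) + \<gamma> * (\<Sum>s'\<in>S. pmf (P s a) s' * V s')"
    by (simp add: td_target_def algebra_simps sum.distrib sum_subtractf sum_distrib_left sum_distrib_right)
  then have "(\<Sum>s'\<in>S. pmf (P s a) s' * td_target \<gamma> R lam V \<pi> (s, a, s')) = consist \<gamma> P R lam \<pi> V (s, a)"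
    using sum1 expectation_transition[OF assms] by (simp add: consist_def)
  then show ?thesis
    using sum_weighted_diff_squares[OF sum1] by (simp add: loss_gap_def)
qed

lemma occupancy_sum_le_concentrability:
  assumes "C2_finite S A \<gamma> P d0 \<mu> Pis" "finite Pis" "\<pi> \<in> Pis"
  shows "\<bar>\<Sum>x\<in>S \<times> A. occupancy \<gamma> P d0 \<pi> x * h x\<bar> \<le> sqrt (conc_C2 \<gamma> P d0 \<mu> Pis) * sqrt (norm2_mu \<mu> h)"
proof -
  have "\<bar>\<Sum>x\<in>S \<times> A. occupancy \<gamma> P d0 \<pi> x * h x\<bar>
      \<le> sqrt (norm2_mu \<mu> (\<lambda>x. occupancy \<gamma> P d0 \<pi> x / pmf \<mu> x)) * sqrt (norm2_mu \<mu> h)"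
    using assms(1,3)
    by (intro norm2_mu_cauchy_schwarz finite_cartesian_product finite_S finite_A data_support)
      (auto simp: C2_finite_def)
  also have "\<dots> \<le> sqrt (conc_C2 \<gamma> P d0 \<mu> Pis) * sqrt (norm2_mu \<mu> h)"
    unfolding conc_C2_def using assms(2,3)
    by (intro mult_right_mono real_sqrt_le_mono Max_ge) (auto simp: norm2_mu_nonneg)
  finally show ?thesis .
qed

lemma suboptimality_le_of_small_residual:
  assumes det: "deterministic_policy S A pistar" and pol_lam: "policy S A pistar_lam"
    and opt_lam: "J_reg \<gamma> P R d0 lam pistar \<le> J_reg \<gamma> P R d0 lam pistar_lam"
    and coverage: "C2_finite S A \<gamma> P d0 \<mu> (insert pistar_lam Pc)"
    and \<pi>: "\<pi> \<in> Pc"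
    and small: "16 * conc_C2 \<gamma> P d0 \<mu> (insert pistar_lam Pc) * norm2_mu \<mu> (bellman_residual \<gamma> P R lam \<pi> V)
      \<le> \<epsilon>\<^sup>2 * (1 - \<gamma>)\<^sup>2"
    and lam_eps: "2 * lam * ln (real (card A)) \<le> (1 - \<gamma>) * \<epsilon>"
  shows "J_ret \<gamma> P R d0 pistar - J_ret \<gamma> P R d0 \<pi> \<le> \<epsilon>"
proof -
  define C where "C = conc_C2 \<gamma> P d0 \<mu> (insert pistar_lam Pc)"
  define \<Delta> where "\<Delta> = norm2_mu \<mu> (bellman_residual \<gamma> P R lam \<pi> V)"
  have residual: "\<bar>\<Sum>x\<in>S \<times> A. occupancy \<gamma> P d0 \<pi>' x * bellman_residual \<gamma> P R lam \<pi> V x\<bar> \<le> sqrt C * sqrt \<Delta>"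
    if "\<pi>' \<in> insert pistar_lam Pc" for \<pi>'
    unfolding C_def \<Delta>_def using coverage finite_Pc that by (intro occupancy_sum_le_concentrability) auto
  have "0 \<le> ln (real (card A))"
    using finite_A A_nonempty by (simp add: Suc_leI card_gt_0_iff)
  then have "0 \<le> \<epsilon>"
    using lam_eps lam_pos discount_less_1 by (smt (verit) mult_nonneg_nonneg zero_le_mult_iff)
  have "C * \<Delta> \<le> (\<epsilon> * (1 - \<gamma>) / 4)\<^sup>2"
    using small unfolding C_def \<Delta>_def by (simp add: power_mult_distrib power_divide)
  then have "sqrt C * sqrt \<Delta> \<le> sqrt ((\<epsilon> * (1 - \<gamma>) / 4)\<^sup>2)"
    unfolding real_sqrt_mult[symmetric] by (rule real_sqrt_le_mono)
  also have "\<dots> = \<epsilon> * (1 - \<gamma>) / 4"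
    using \<open>0 \<le> \<epsilon>\<close> discount_less_1 by simp
  finally have "sqrt C * sqrt \<Delta> \<le> \<epsilon> * (1 - \<gamma>) / 4" .
  then have "2 * (sqrt C * sqrt \<Delta>) + lam * ln (real (card A)) \<le> \<epsilon> * (1 - \<gamma>)"
    using lam_eps by (simp add: algebra_simps)
  then have "(2 * (sqrt C * sqrt \<Delta>) + lam * ln (real (card A))) / (1 - \<gamma>) \<le> \<epsilon>"
    using discount_less_1 by (simp add: divide_le_eq)
  moreover have "J_ret \<gamma> P R d0 pistar - J_ret \<gamma> P R d0 \<pi>
      \<le> (2 * (sqrt C * sqrt \<Delta>) + lam * ln (real (card A))) / (1 - \<gamma>)"
    using lam_pos \<pi> residual[of pistar_lam] residual[of \<pi>]
    by (intro J_ret_suboptimality_le_residuals[OF det pol_lam opt_lam policy_class[OF \<pi>]] policy_pos)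
      auto
  ultimately show ?thesis
    by linarith
qed

lemma consistent_value_of_eps_VP:
  assumes "eps_VP \<gamma> P R lam \<mu> Vc Pc = 0"
  obtains V0 \<pi>0 where "V0 \<in> Vc" "\<pi>0 \<in> Pc" "\<And>x. x \<in> set_pmf \<mu> \<Longrightarrow> V0 (fst x) = consist \<gamma> P R lam \<pi>0 V0 x"
proof -
  let ?F = "\<lambda>(V, \<pi>). norm2_mu \<mu> (bellman_residual \<gamma> P R lam \<pi> V)"
  have "Min (?F ` (Vc \<times> Pc)) \<in> ?F ` (Vc \<times> Pc)"
    using finite_Vc finite_Pc Vc_nonempty Pc_nonempty by (intro Min_in) auto
  then obtain V0 \<pi>0 where "V0 \<in> Vc" "\<pi>0 \<in> Pc" "norm2_mu \<mu> (bellman_residual \<gamma> P R lam \<pi>0 V0) = 0"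
    using assms by (auto simp: eps_VP_def bellman_residual_def)
  moreover have "V0 (fst x) = consist \<gamma> P R lam \<pi>0 V0 x" if "x \<in> set_pmf \<mu>" and
    "norm2_mu \<mu> (bellman_residual \<gamma> P R lam \<pi>0 V0) = 0" for x
    using norm2_mu_eq_0_imp_zero_on_support[OF that(2) finite_cartesian_product[OF finite_S finite_A]
        data_support that(1)]
    by (simp add: bellman_residual_def split_beta')
  ultimately show ?thesis
    using that by blast
qed

lemma critic_complete_of_eps_GVP:
  assumes "eps_GVP \<gamma> P R lam \<mu> Gc Vc Pc = 0" "V \<in> Vc" "\<pi> \<in> Pc"
  shows "\<exists>g\<in>Gc. \<forall>x\<in>set_pmf \<mu>. g x = consist \<gamma> P R lam \<pi> V x"
proof -
  define err where "err g = norm2_mu \<mu> (\<lambda>x. g x - consist \<gamma> P R lam \<pi> V x)" for g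
  have "Min (err ` Gc) \<le> eps_GVP \<gamma> P R lam \<mu> Gc Vc Pc"
    unfolding eps_GVP_def err_def using finite_Vc finite_Pc assms(2,3) by (intro Max_ge) auto
  moreover have "Min (err ` Gc) \<in> err ` Gc"
    using finite_Gc Gc_nonempty by (intro Min_in) auto
  ultimately obtain g where g: "g \<in> Gc" and "err g = 0"
    using assms(1) norm2_mu_nonneg unfolding err_def by (metis (no_types, lifting) image_iff order_antisym)
  then have "g x - consist \<gamma> P R lam \<pi> V x = 0" if "x \<in> set_pmf \<mu>" for x
    using norm2_mu_eq_0_imp_zero_on_support[OF _ finite_cartesian_product[OF finite_S finite_A] data_support that]
    unfolding err_def by blast
  then show ?thesis
    using g by (intro bexI[of _ g]) auto
qed

end

section \<open>Sample complexity under realizability\<close>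

locale realizable_sbeed = sbeed +
  fixes V0 :: "nat \<Rightarrow> real" and \<pi>0 :: "nat \<Rightarrow> nat pmf"
  assumes V0_class: "V0 \<in> Vc" and \<pi>0_class: "\<pi>0 \<in> Pc"
    and V0_consistent: "x \<in> set_pmf \<mu> \<Longrightarrow> V0 (fst x) = consist \<gamma> P R lam \<pi>0 V0 x"
    and critic_complete: "V \<in> Vc \<Longrightarrow> \<pi> \<in> Pc \<Longrightarrow> \<exists>g\<in>Gc. \<forall>x\<in>set_pmf \<mu>. g x = consist \<gamma> P R lam \<pi> V x"
begin

definition critic :: "(nat \<Rightarrow> real) \<Rightarrow> (nat \<Rightarrow> nat pmf) \<Rightarrow> nat \<times> nat \<Rightarrow> real"
  where "critic V \<pi> = (SOME g. g \<in> Gc \<and> (\<forall>x\<in>set_pmf \<mu>. g x = consist \<gamma> P R lam \<pi> V x))"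

lemma critic_class: "critic V \<pi> \<in> Gc"
  and critic_consistent: "x \<in> set_pmf \<mu> \<Longrightarrow> critic V \<pi> x = consist \<gamma> P R lam \<pi> V x"
  if "V \<in> Vc" "\<pi> \<in> Pc"
  using someI_ex[OF critic_complete[OF that, unfolded Bex_def]] unfolding critic_def by blast+

lemma norm2_bellman_residual_le:
  assumes "V \<in> Vc" "\<pi> \<in> Pc"
  shows "norm2_mu \<mu> (bellman_residual \<gamma> P R lam \<pi> V) \<le> (2 * vmax)\<^sup>2"
proof (rule norm2_mu_le_square[OF finite_cartesian_product[OF finite_S finite_A] data_support])
  fix x assume x: "x \<in> set_pmf \<mu>"
  then have "x \<in> S \<times> A"
    using data_support by blast
  then show "\<bar>bellman_residual \<gamma> P R lam \<pi> V x\<bar> \<le> 2 * vmax"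
    using critic_consistent[OF assms x] critic_bounds[OF critic_class[OF assms]]
      value_bounds[OF assms(1)]
    by (force simp: bellman_residual_def split_beta')
qed

text \<open>The SBEED objective at (V, pi) is at least its value at the exact critic of (V, pi), and at
  (V0, pi0) it is attained at some critic g'; minimality of an output compares the two.\<close>

definition excess_loss :: "(nat \<Rightarrow> real) \<Rightarrow> (nat \<Rightarrow> nat pmf) \<Rightarrow> (nat \<times> nat \<Rightarrow> real) \<Rightarrow> nat \<times> nat \<times> nat \<Rightarrow> real"
  where "excess_loss V \<pi> g' x = loss_gap \<gamma> R lam V \<pi> (critic V \<pi>) x - loss_gap \<gamma> R lam V0 \<pi>0 g' x"

lemma expected_excess_loss:
  assumes "V \<in> Vc" "\<pi> \<in> Pc" "(s, a) \<in> set_pmf \<mu>"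
  shows "(\<Sum>s'\<in>S. pmf (P s a) s' * excess_loss V \<pi> g' (s, a, s'))
     = (bellman_residual \<gamma> P R lam \<pi> V (s, a))\<^sup>2 + (V0 s - g' (s, a))\<^sup>2"
proof -
  have sa: "s \<in> S" "a \<in> A"
    using assms(3) data_support by auto
  have "V0 s = consist \<gamma> P R lam \<pi>0 V0 (s, a)"
    using V0_consistent[OF assms(3)] by simp
  then show ?thesis
    using expected_loss_gap[OF sa, of V \<pi> "critic V \<pi>"] expected_loss_gap[OF sa, of V0 \<pi>0 g']
      critic_consistent[OF assms]
    by (simp add: excess_loss_def bellman_residual_def right_diff_distrib sum_subtractf
        power2_eq_square algebra_simps)
qed

lemma excess_loss_bounds:
  assumes "V \<in> Vc" "\<pi> \<in> Pc" "g' \<in> Gc" "(s, a) \<in> set_pmf \<mu>" "s' \<in> S"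
  shows "\<bar>excess_loss V \<pi> g' (s, a, s')\<bar> \<le> 24 * vmax\<^sup>2"
    and "(excess_loss V \<pi> g' (s, a, s'))\<^sup>2
       \<le> 72 * vmax\<^sup>2 * ((bellman_residual \<gamma> P R lam \<pi> V (s, a))\<^sup>2 + (V0 s - g' (s, a))\<^sup>2)"
proof -
  have sa: "s \<in> S" "a \<in> A"
    using assms(4) data_support by auto
  define u where "u = loss_gap \<gamma> R lam V \<pi> (critic V \<pi>) (s, a, s')"
  define u0 where "u0 = loss_gap \<gamma> R lam V0 \<pi>0 g' (s, a, s')"
  have u: "\<bar>u\<bar> \<le> 12 * vmax\<^sup>2" "u\<^sup>2 \<le> 36 * vmax\<^sup>2 * (bellman_residual \<gamma> P R lam \<pi> V (s, a))\<^sup>2"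
    using loss_gap_bounds[OF assms(1,2) critic_class[OF assms(1,2)] sa assms(5)]
      critic_consistent[OF assms(1,2,4)]
    by (simp_all add: u_def bellman_residual_def)
  have u0: "\<bar>u0\<bar> \<le> 12 * vmax\<^sup>2" "u0\<^sup>2 \<le> 36 * vmax\<^sup>2 * (V0 s - g' (s, a))\<^sup>2"
    using loss_gap_bounds[OF V0_class \<pi>0_class assms(3) sa assms(5)] by (simp_all add: u0_def)
  have "(u - u0)\<^sup>2 \<le> 2 * u\<^sup>2 + 2 * u0\<^sup>2"
    using zero_le_power2[of "u + u0"] by (simp add: power2_eq_square algebra_simps)
  then show "(excess_loss V \<pi> g' (s, a, s'))\<^sup>2
       \<le> 72 * vmax\<^sup>2 * ((bellman_residual \<gamma> P R lam \<pi> V (s, a))\<^sup>2 + (V0 s - g' (s, a))\<^sup>2)"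
    using u u0 by (simp add: excess_loss_def u_def u0_def algebra_simps)
  show "\<bar>excess_loss V \<pi> g' (s, a, s')\<bar> \<le> 24 * vmax\<^sup>2"
    using u u0 by (simp add: excess_loss_def u_def u0_def abs_le_iff)
qed

text \<open>The scale 1 / (144 vmax^2) makes t |U| <= 1/6 and t^2 E U^2 <= t E U / 2 for the excess loss U.\<close>

lemma conditional_exp_excess_loss_le:
  assumes "V \<in> Vc" "\<pi> \<in> Pc" "g' \<in> Gc" "(s, a) \<in> set_pmf \<mu>" "0 < vmax"
  defines "m \<equiv> (bellman_residual \<gamma> P R lam \<pi> V (s, a))\<^sup>2 + (V0 s - g' (s, a))\<^sup>2"
  shows "(\<Sum>s'\<in>S. pmf (P s a) s' * exp (- (1 / (144 * vmax\<^sup>2)) * excess_loss V \<pi> g' (s, a, s')))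
     \<le> 1 - m / (288 * vmax\<^sup>2)"
proof -
  define t where "t = 1 / (144 * vmax\<^sup>2)"
  have sa: "s \<in> S" "a \<in> A"
    using assms(4) data_support by auto
  note bounds = excess_loss_bounds[OF assms(1-4)]
  have "\<bar>t * excess_loss V \<pi> g' (s, a, s')\<bar> \<le> 1" if "s' \<in> S" for s'
  proof -
    have "\<bar>t * excess_loss V \<pi> g' (s, a, s')\<bar> \<le> t * (24 * vmax\<^sup>2)"
      using bounds(1)[OF that] assms(5) by (simp add: t_def abs_mult)
    also have "\<dots> \<le> 1"
      using assms(5) by (simp add: t_def)
    finally show ?thesis .
  qed
  then have "(\<Sum>s'\<in>S. pmf (P s a) s' * exp (- t * excess_loss V \<pi> g' (s, a, s')))
      \<le> 1 - t * (\<Sum>s'\<in>S. pmf (P s a) s' * excess_loss V \<pi> g' (s, a, s'))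
        + t\<^sup>2 * (\<Sum>s'\<in>S. pmf (P s a) s' * (excess_loss V \<pi> g' (s, a, s'))\<^sup>2)"
    by (rule sum_pmf_exp_neg_le[OF finite_S transition_support[OF sa]])
  also have "\<dots> \<le> 1 - t * m + t\<^sup>2 * (72 * vmax\<^sup>2 * m)"
  proof -
    have "(\<Sum>s'\<in>S. pmf (P s a) s' * (excess_loss V \<pi> g' (s, a, s'))\<^sup>2)
        \<le> (\<Sum>s'\<in>S. pmf (P s a) s' * (72 * vmax\<^sup>2 * m))"
      using bounds(2) by (intro sum_mono mult_left_mono) (auto simp: m_def)
    also have "\<dots> = 72 * vmax\<^sup>2 * m"
      using sum_pmf_eq_1[OF finite_S transition_support[OF sa]] by (simp flip: sum_distrib_right)
    finally show ?thesis
      using expected_excess_loss[OF assms(1,2,4)] by (simp add: m_def mult_left_mono)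
  qed
  also have "\<dots> = 1 - m / (288 * vmax\<^sup>2)"
    using assms(5) by (simp add: t_def power2_eq_square field_simps)
  finally show ?thesis
    by (simp add: t_def)
qed

lemma nn_integral_exp_excess_loss_le:
  assumes "V \<in> Vc" "\<pi> \<in> Pc" "g' \<in> Gc" "0 < vmax"
  shows "(\<integral>\<^sup>+x. ennreal (exp (- (1 / (144 * vmax\<^sup>2)) * excess_loss V \<pi> g' x)) \<partial>measure_pmf (sample_pmf \<mu> P))
     \<le> ennreal (exp (- (norm2_mu \<mu> (bellman_residual \<gamma> P R lam \<pi> V) / (288 * vmax\<^sup>2))))"
proof -
  define t where "t = 1 / (144 * vmax\<^sup>2)"
  define m where "m x = (bellman_residual \<gamma> P R lam \<pi> V x)\<^sup>2 + (V0 (fst x) - g' x)\<^sup>2" for x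
  have fin: "finite (S \<times> A)"
    using finite_S finite_A by simp
  have "pmf \<mu> x * (\<Sum>s'\<in>S. pmf (P (fst x) (snd x)) s' * exp (- t * excess_loss V \<pi> g' (fst x, snd x, s')))
      \<le> pmf \<mu> x * (1 - m x / (288 * vmax\<^sup>2))" for x
  proof (cases "x \<in> set_pmf \<mu>")
    case True
    then show ?thesis
      using conditional_exp_excess_loss_le[OF assms(1-3) _ assms(4), of "fst x" "snd x"]
      by (intro mult_left_mono) (auto simp: t_def m_def)
  qed (simp add: set_pmf_iff)
  then have "(\<Sum>(s, a)\<in>S \<times> A. pmf \<mu> (s, a) * (\<Sum>s'\<in>S. pmf (P s a) s' * exp (- t * excess_loss V \<pi> g' (s, a, s'))))
      \<le> (\<Sum>x\<in>S \<times> A. pmf \<mu> x * (1 - m x / (288 * vmax\<^sup>2)))"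
    by (simp add: split_beta' sum_mono)
  also have "\<dots> = 1 - (\<Sum>x\<in>S \<times> A. pmf \<mu> x * m x) / (288 * vmax\<^sup>2)"
    using sum_pmf_eq_1[OF fin data_support]
    by (simp add: algebra_simps sum_subtractf sum_divide_distrib sum_distrib_left)
  also have "\<dots> \<le> 1 - norm2_mu \<mu> (bellman_residual \<gamma> P R lam \<pi> V) / (288 * vmax\<^sup>2)"
  proof -
    have "norm2_mu \<mu> (bellman_residual \<gamma> P R lam \<pi> V) \<le> (\<Sum>x\<in>S \<times> A. pmf \<mu> x * m x)"
      unfolding norm2_mu_finite_sum[OF fin data_support] m_def by (intro sum_mono mult_left_mono) auto
    then show ?thesis
      using assms(4) by (simp add: divide_right_mono)
  qed
  also have "\<dots> \<le> exp (- (norm2_mu \<mu> (bellman_residual \<gamma> P R lam \<pi> V) / (288 * vmax\<^sup>2)))"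
    using exp_ge_add_one_self[of "- (norm2_mu \<mu> (bellman_residual \<gamma> P R lam \<pi> V) / (288 * vmax\<^sup>2))"]
    by simp
  finally show ?thesis
    by (subst nn_integral_sample_pmf[OF data_support]) (simp_all add: t_def ennreal_leI)
qed

text \<open>For vmax = 0 the bound reads exp 0 = 1, since x / 0 = 0.\<close>

lemma prob_excess_loss_nonpos_le:
  assumes "V \<in> Vc" "\<pi> \<in> Pc" "g' \<in> Gc"
  shows "measure_pmf.prob (dataset_pmf \<mu> P n) {D. sum_list (map (excess_loss V \<pi> g') D) \<le> 0}
     \<le> exp (- (real n * norm2_mu \<mu> (bellman_residual \<gamma> P R lam \<pi> V) / (288 * vmax\<^sup>2)))"
proof (cases "vmax = 0")
  case False
  then have "0 < vmax"
    using vmax_nonneg by simp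
  then have "measure_pmf.prob (dataset_pmf \<mu> P n) {D. sum_list (map (excess_loss V \<pi> g') D) \<le> 0}
      \<le> exp (- (norm2_mu \<mu> (bellman_residual \<gamma> P R lam \<pi> V) / (288 * vmax\<^sup>2))) ^ n"
    by (intro prob_dataset_sum_nonpos_le[OF _ _ nn_integral_exp_excess_loss_le[OF assms]]) auto
  then show ?thesis
    by (simp add: exp_of_nat_mult[symmetric])
qed simp

lemma prob_excess_loss_nonpos_le_exp:
  assumes "V \<in> Vc" "\<pi> \<in> Pc" "g' \<in> Gc" "0 < E"
    and large_residual: "E < 16 * C * norm2_mu \<mu> (bellman_residual \<gamma> P R lam \<pi> V)"
    and sample_size: "4608 * C * vmax\<^sup>2 * L / E \<le> real n"
  shows "measure_pmf.prob (dataset_pmf \<mu> P n) {D. sum_list (map (excess_loss V \<pi> g') D) \<le> 0} \<le> exp (- L)"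
proof -
  define \<Delta> where "\<Delta> = norm2_mu \<mu> (bellman_residual \<gamma> P R lam \<pi> V)"
  have "0 < 16 * C * \<Delta>"
    using assms(4) large_residual unfolding \<Delta>_def by linarith
  then have "0 < C" "0 < \<Delta>"
    using norm2_mu_nonneg[of \<mu> "bellman_residual \<gamma> P R lam \<pi> V"] unfolding \<Delta>_def
    by (auto simp: zero_less_mult_iff)
  moreover have "0 < vmax"
    using \<open>0 < \<Delta>\<close> norm2_bellman_residual_le[OF assms(1,2)] vmax_nonneg unfolding \<Delta>_def
    by (cases "vmax = 0") auto
  moreover have "16 * C * (288 * vmax\<^sup>2 * L) \<le> 16 * C * (real n * \<Delta>)"
  proof -
    have "4608 * C * vmax\<^sup>2 * L \<le> real n * E"
      using sample_size assms(4) by (simp add: pos_divide_le_eq)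
    also have "\<dots> \<le> real n * (16 * C * \<Delta>)"
      using large_residual unfolding \<Delta>_def by (intro mult_left_mono) auto
    finally show ?thesis
      by (simp add: algebra_simps)
  qed
  ultimately have "L \<le> real n * \<Delta> / (288 * vmax\<^sup>2)"
    by (simp add: le_divide_eq mult.commute)
  then have "exp (- (real n * \<Delta> / (288 * vmax\<^sup>2))) \<le> exp (- L)"
    by simp
  then show ?thesis
    using prob_excess_loss_nonpos_le[OF assms(1-3), of n] unfolding \<Delta>_def by linarith
qed

lemma sbeed_output_excess_loss_nonpos:
  assumes "sbeed_output \<gamma> R lam Vc Pc Gc D V \<pi>"
  shows "\<exists>g'\<in>Gc. sum_list (map (excess_loss V \<pi> g') D) \<le> 0"
proof -
  have "V \<in> Vc" "\<pi> \<in> Pc"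
    using assms by (auto simp: sbeed_output_def)
  then obtain g' where "g' \<in> Gc"
    "sum_list (map (loss_gap \<gamma> R lam V \<pi> (critic V \<pi>)) D) \<le> sum_list (map (loss_gap \<gamma> R lam V0 \<pi>0 g') D)"
    using sbeed_output_loss_gap_le[OF assms V0_class \<pi>0_class critic_class finite_Gc] by blast
  moreover have "sum_list (map (excess_loss V \<pi> g') D)
      = sum_list (map (loss_gap \<gamma> R lam V \<pi> (critic V \<pi>)) D) - sum_list (map (loss_gap \<gamma> R lam V0 \<pi>0 g') D)"
    by (induction D) (simp_all add: excess_loss_def)
  ultimately show ?thesis
    by force
qed

lemma prob_excess_loss_nonpos_for_large_residual_le:
  assumes "0 < E" "0 < \<delta>"
    and sample_size: "4608 * C * vmax\<^sup>2 * ln (real (card Vc * card Pc * card Gc) / \<delta>) / E \<le> real n"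
  shows "measure_pmf.prob (dataset_pmf \<mu> P n) {D. \<exists>V\<in>Vc. \<exists>\<pi>\<in>Pc. \<exists>g'\<in>Gc.
      E < 16 * C * norm2_mu \<mu> (bellman_residual \<gamma> P R lam \<pi> V) \<and> sum_list (map (excess_loss V \<pi> g') D) \<le> 0}
    \<le> \<delta>"
proof -
  define K where "K = real (card Vc * card Pc * card Gc)"
  define bad where "bad = {(V, \<pi>, g'). V \<in> Vc \<and> \<pi> \<in> Pc \<and> g' \<in> Gc
      \<and> E < 16 * C * norm2_mu \<mu> (bellman_residual \<gamma> P R lam \<pi> V)}"
  define B where "B = (\<lambda>(V, \<pi>, g'). {D. sum_list (map (excess_loss V \<pi> g') D) \<le> 0})"
  let ?prob = "measure_pmf.prob (dataset_pmf \<mu> P n)"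
  have "bad \<subseteq> Vc \<times> Pc \<times> Gc"
    by (auto simp: bad_def)
  then have "finite bad" "card bad \<le> card Vc * card Pc * card Gc"
    using finite_Vc finite_Pc finite_Gc card_mono[of "Vc \<times> Pc \<times> Gc" bad]
    by (auto simp: card_cartesian_product finite_subset mult.assoc)
  then have "real (card bad) \<le> K"
    unfolding K_def by (simp only: of_nat_le_iff)
  have "0 < card Vc * card Pc * card Gc"
    using finite_Vc finite_Pc finite_Gc Vc_nonempty Pc_nonempty Gc_nonempty by (simp add: card_gt_0_iff)
  then have "1 \<le> K"
    unfolding K_def by linarith
  have "exp (- ln (K / \<delta>)) = \<delta> / K"
    using \<open>1 \<le> K\<close> assms(2) by (simp add: exp_minus)
  then have bad_event: "?prob (B i) \<le> \<delta> / K" if "i \<in> bad" for i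
    using that sample_size assms(1)
    by (auto simp: bad_def B_def K_def intro!: prob_excess_loss_nonpos_le_exp[THEN order_trans])
  have "?prob (\<Union>i\<in>bad. B i) \<le> (\<Sum>i\<in>bad. ?prob (B i))"
    by (rule measure_pmf.finite_measure_subadditive_finite[OF \<open>finite bad\<close>]) auto
  also have "\<dots> \<le> real (card bad) * (\<delta> / K)"
    using sum_mono[OF bad_event] by simp
  also have "\<dots> \<le> \<delta>"
    using \<open>real (card bad) \<le> K\<close> \<open>1 \<le> K\<close> assms(2) by (simp add: field_simps)
  also have "(\<Union>i\<in>bad. B i) = {D. \<exists>V\<in>Vc. \<exists>\<pi>\<in>Pc. \<exists>g'\<in>Gc.
      E < 16 * C * norm2_mu \<mu> (bellman_residual \<gamma> P R lam \<pi> V) \<and> sum_list (map (excess_loss V \<pi> g') D) \<le> 0}"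
    by (auto simp: bad_def B_def)
  finally show ?thesis .
qed

lemma prob_sbeed_output_near_optimal:
  assumes det: "deterministic_policy S A pistar" and pol_lam: "policy S A pistar_lam"
    and opt_lam: "J_reg \<gamma> P R d0 lam pistar \<le> J_reg \<gamma> P R d0 lam pistar_lam"
    and coverage: "C2_finite S A \<gamma> P d0 \<mu> (insert pistar_lam Pc)"
    and "0 < \<epsilon>" "0 < \<delta>"
    and lam_eps: "2 * lam * ln (real (card A)) \<le> (1 - \<gamma>) * \<epsilon>"
    and sample_size: "4608 * conc_C2 \<gamma> P d0 \<mu> (insert pistar_lam Pc) * vmax\<^sup>2
        * ln (real (card Vc * card Pc * card Gc) / \<delta>) / (\<epsilon>\<^sup>2 * (1 - \<gamma>)\<^sup>2) \<le> real n"
  shows "1 - \<delta> \<le> measure_pmf.prob (dataset_pmf \<mu> P n)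
     {D. \<forall>V \<pi>. sbeed_output \<gamma> R lam Vc Pc Gc D V \<pi> \<longrightarrow> J_ret \<gamma> P R d0 pistar - J_ret \<gamma> P R d0 \<pi> \<le> \<epsilon>}"
proof -
  define C where "C = conc_C2 \<gamma> P d0 \<mu> (insert pistar_lam Pc)"
  define E where "E = \<epsilon>\<^sup>2 * (1 - \<gamma>)\<^sup>2"
  define bad where "bad = {D. \<exists>V\<in>Vc. \<exists>\<pi>\<in>Pc. \<exists>g'\<in>Gc.
      E < 16 * C * norm2_mu \<mu> (bellman_residual \<gamma> P R lam \<pi> V) \<and> sum_list (map (excess_loss V \<pi> g') D) \<le> 0}"
  let ?prob = "measure_pmf.prob (dataset_pmf \<mu> P n)"
  have "0 < E"
    using \<open>0 < \<epsilon>\<close> discount_less_1 by (simp add: E_def)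
  then have "?prob bad \<le> \<delta>"
    unfolding bad_def using prob_excess_loss_nonpos_for_large_residual_le \<open>0 < \<delta>\<close> sample_size
    by (simp add: C_def E_def)
  have "UNIV - bad \<subseteq> {D. \<forall>V \<pi>. sbeed_output \<gamma> R lam Vc Pc Gc D V \<pi>
      \<longrightarrow> J_ret \<gamma> P R d0 pistar - J_ret \<gamma> P R d0 \<pi> \<le> \<epsilon>}"
  proof (intro subsetI CollectI allI impI)
    fix D V \<pi>
    assume D: "D \<in> UNIV - bad" and solution: "sbeed_output \<gamma> R lam Vc Pc Gc D V \<pi>"
    then have "V \<in> Vc" "\<pi> \<in> Pc"
      by (auto simp: sbeed_output_def)
    obtain g' where "g' \<in> Gc" "sum_list (map (excess_loss V \<pi> g') D) \<le> 0"
      using sbeed_output_excess_loss_nonpos[OF solution] by blast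
    then have "16 * C * norm2_mu \<mu> (bellman_residual \<gamma> P R lam \<pi> V) \<le> E"
      using D \<open>V \<in> Vc\<close> \<open>\<pi> \<in> Pc\<close> unfolding bad_def by force
    then show "J_ret \<gamma> P R d0 pistar - J_ret \<gamma> P R d0 \<pi> \<le> \<epsilon>"
      unfolding C_def E_def
      by (rule suboptimality_le_of_small_residual[OF det pol_lam opt_lam coverage \<open>\<pi> \<in> Pc\<close> _ lam_eps])
  qed
  then have "?prob (UNIV - bad) \<le> ?prob {D. \<forall>V \<pi>. sbeed_output \<gamma> R lam Vc Pc Gc D V \<pi>
      \<longrightarrow> J_ret \<gamma> P R d0 pistar - J_ret \<gamma> P R d0 \<pi> \<le> \<epsilon>}"
    by (rule measure_pmf.finite_measure_mono) simp
  moreover have "?prob (UNIV - bad) = 1 - ?prob bad"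
    using measure_pmf.prob_compl[of bad] by simp
  ultimately show ?thesis
    using \<open>?prob bad \<le> \<delta>\<close> by linarith
qed

end

lemma sbeed_sample_complexity:
  assumes mdp: "finite_mdp S A \<gamma> P R Rmax d0" and data: "set_pmf \<mu> \<subseteq> S \<times> A"
    and classes: "function_classes S A (Vmax A \<gamma> Rmax lam) lam Vc Pc Gc"
    and det: "deterministic_policy S A pistar" and pol_lam: "policy S A pistar_lam"
    and opt_lam: "\<forall>\<pi>. policy S A \<pi> \<longrightarrow> J_reg \<gamma> P R d0 lam \<pi> \<le> J_reg \<gamma> P R d0 lam pistar_lam"
    and "0 < \<epsilon>" "0 < \<delta>"
    and coverage: "C2_finite S A \<gamma> P d0 \<mu> (insert pistar_lam Pc)"
    and critic_realizable: "eps_GVP \<gamma> P R lam \<mu> Gc Vc Pc = 0"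
    and value_realizable: "eps_VP \<gamma> P R lam \<mu> Vc Pc = 0"
    and "0 < lam" and lam_eps: "2 * lam * ln (real (card A)) \<le> (1 - \<gamma>) * \<epsilon>"
    and sample_size: "real n \<ge> 4608 * conc_C2 \<gamma> P d0 \<mu> (insert pistar_lam Pc) * (Vmax A \<gamma> Rmax lam)\<^sup>2
        * ln (real (card Vc * card Pc * card Gc) / \<delta>) / (\<epsilon>\<^sup>2 * (1 - \<gamma>)\<^sup>2)"
  shows "measure_pmf.prob (dataset_pmf \<mu> P n)
     {D. \<forall>V \<pi>. sbeed_output \<gamma> R lam Vc Pc Gc D V \<pi> \<longrightarrow> J_ret \<gamma> P R d0 pistar - J_ret \<gamma> P R d0 \<pi> \<le> \<epsilon>}
     \<ge> 1 - \<delta>"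
proof -
  interpret sbeed S A \<gamma> P R Rmax d0 \<mu> lam Vc Pc Gc
    using mdp data classes \<open>0 < lam\<close> by unfold_locales
  obtain V0 \<pi>0 where "V0 \<in> Vc" "\<pi>0 \<in> Pc" "\<And>x. x \<in> set_pmf \<mu> \<Longrightarrow> V0 (fst x) = consist \<gamma> P R lam \<pi>0 V0 x"
    using consistent_value_of_eps_VP[OF value_realizable] by blast
  then interpret realizable_sbeed S A \<gamma> P R Rmax d0 \<mu> lam Vc Pc Gc V0 \<pi>0
    using critic_complete_of_eps_GVP[OF critic_realizable] by unfold_locales
  show ?thesis
    using det opt_lam by (intro prob_sbeed_output_near_optimal[OF det pol_lam _ coverage \<open>0 < \<epsilon>\<close> \<open>0 < \<delta>\<close>
        lam_eps sample_size]) (simp add: deterministic_policy_def)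
qed

theorem theorem2:
  "\<exists>c::real. c > 0 \<and>
    (\<forall>(S::nat set) (A::nat set) (\<gamma>::real) P R Rmax d0 (\<mu>::(nat \<times> nat) pmf) (lam::real)
       Vc Pc Gc pistar pistar_lam (\<epsilon>::real) (\<delta>::real) (n::nat).
       finite_mdp S A \<gamma> P R Rmax d0 \<and> set_pmf \<mu> \<subseteq> S \<times> A \<and>
       function_classes S A (Vmax A \<gamma> Rmax lam) lam Vc Pc Gc \<and>
       deterministic_policy S A pistar \<and>
       (\<forall>\<pi>. policy S A \<pi> \<longrightarrow> J_ret \<gamma> P R d0 \<pi> \<le> J_ret \<gamma> P R d0 pistar) \<and>
       policy S A pistar_lam \<and>
       (\<forall>\<pi>. policy S A \<pi> \<longrightarrow> J_reg \<gamma> P R d0 lam \<pi> \<le> J_reg \<gamma> P R d0 lam pistar_lam) \<and>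
       \<epsilon> > 0 \<and> 0 < \<delta> \<and> \<delta> < 1 \<and>
       C2_finite S A \<gamma> P d0 \<mu> (insert pistar_lam Pc) \<and>
       eps_GVP \<gamma> P R lam \<mu> Gc Vc Pc = 0 \<and> eps_VP \<gamma> P R lam \<mu> Vc Pc = 0 \<and>
       0 < lam \<and> 2 * lam * ln (real (card A)) \<le> (1 - \<gamma>) * \<epsilon> \<and>
       real n \<ge> c * conc_C2 \<gamma> P d0 \<mu> (insert pistar_lam Pc) * (Vmax A \<gamma> Rmax lam)\<^sup>2
                 * ln (real (card Vc * card Pc * card Gc) / \<delta>) / (\<epsilon>\<^sup>2 * (1 - \<gamma>)\<^sup>2)
       \<longrightarrow>
       measure_pmf.prob (dataset_pmf \<mu> P n)
         {D. \<forall>V \<pi>. sbeed_output \<gamma> R lam Vc Pc Gc D V \<pi> \<longrightarrow>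
                 J_ret \<gamma> P R d0 pistar - J_ret \<gamma> P R d0 \<pi> \<le> \<epsilon>} \<ge> 1 - \<delta>)"
proof (intro exI[of _ 4608] conjI allI impI)
  show "(4608::real) > 0"
    by simp
qed (elim conjE, rule sbeed_sample_complexity)

end
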